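(* Let $\varepsilon>0$ and $\boldsymbol{\mu}\in H^2(\Omega)^{n+1}$. Then the minimization problem $\min_{\boldsymbol{w}\in\mathcal{A}}F_{\boldsymbol{\mu}}(\boldsymbol{w})$ admits a unique solution $\boldsymbol{u}\in\mathcal{A}$, where $$F_{\boldsymbol{\mu}}(\boldsymbol{w})=\sum_{i=0}^n\int_\Omega\Big(w_i\ln w_i+\sum_{k=0}^nc_{ik}B_\varepsilon(w_k)w_i-\mu_iw_i\Big)\,dx.$$
   Context: $\Omega$ is the $d$-dimensional flat torus, $d\in\{2,3\}$; $n\ge1$. $\mathcal{A}=\{\boldsymbol{u}\in L^2(\Omega)^{n+1}:u_i\ge0\ \forall i,\ \sum_{i=0}^nu_i=1\text{ a.e.}\}$. $C=(c_{ij})_{i,j=0}^n$ is symmetric positive semidefinite with $c_{ii}>0$ and $(n-1)\sup_{j\ne i}|c_{ij}|\ll\min_ic_{ii}$. Kernel: $\rho\in C^\infty_c(0,\operatorname{diam}\Omega)$, $\rho\ge0$, $\int_0^\infty\rho(r)r^{d-3}dr<\infty$, $\int_0^\infty\rho(r)r^{d-1}dr=2/\int_{\mathbb{S}^{d-1}}|\sigma\cdot e_1|d\mathcal{H}^{d-1}(\sigma)$; $\rho_\varepsilon(r)=\varepsilon^{-d}\rho(r/\varepsilon)$, $K_\varepsilon(x,y)=\rho_\varepsilon(|x-y|)/|x-y|^2\in L^1(\Omega\times\Omega)$, symmetric. $B_\varepsilon(v)=(K_\varepsilon*1)v-K_\varepsilon*v$ with $(K_\varepsilon*1)(x)=\int_\Omega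 K_\varepsilon(x,y)dy$, $(K_\varepsilon*v)(x)=\int_\Omega K_\varepsilon(x,y)v(y)dy$. Convention $0\ln0=0$. *)

theory Defs
  imports "HOL-Analysis.Analysis"
begin

section \<open>The flat torus \<open>\<Omega> = \<real>^d / \<int>^d\<close>, represented by the fundamental cell [0,1)^d\<close>

definition torus_cell :: "('d::finite) itself \<Rightarrow> (real^'d) set" where
  "torus_cell _ = {x. \<forall>i. 0 \<le> x $ i \<and> x $ i < 1}"

definition torus_meas :: "('d::finite) itself \<Rightarrow> (real^'d) measure" where
  "torus_meas T = lebesgue_on (torus_cell T)"

definition tdist :: "real^'d::finite \<Rightarrow> real^'d \<Rightarrow> real" where
  "tdist x y = (INF k\<in>(UNIV :: ('d \<Rightarrow> int) set). norm (x - y - (\<chi> i. real_of_int (k i))))"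

definition torus_diam :: "('d::finite) itself \<Rightarrow> real" where
  "torus_diam _ = sqrt (real CARD('d)) / 2"

definition L2 :: "'a measure \<Rightarrow> ('a \<Rightarrow> real) \<Rightarrow> bool" where
  "L2 M f \<longleftrightarrow> f \<in> borel_measurable M \<and> integrable M (\<lambda>x. (f x)\<^sup>2)"

definition pd :: "'d::finite \<Rightarrow> (real^'d \<Rightarrow> real) \<Rightarrow> real^'d \<Rightarrow> real" where
  "pd i f x = deriv (\<lambda>t. f (x + t *\<^sub>R axis i 1)) 0"

fun pds :: "'d::finite list \<Rightarrow> (real^'d \<Rightarrow> real) \<Rightarrow> real^'d \<Rightarrow> real" where
  "pds [] f = f"
| "pds (i # is) f = pd i (pds is f)"

definition smooth_fn :: "(real^'d::finite \<Rightarrow> real) \<Rightarrow> bool" where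
  "smooth_fn f \<longleftrightarrow> (\<forall>is. continuous_on UNIV (pds is f) \<and>
      (\<forall>i x. (\<lambda>t. pds is f (x + t *\<^sub>R axis i 1)) differentiable (at 0)))"

definition periodic_fn :: "(real^'d::finite \<Rightarrow> real) \<Rightarrow> bool" where
  "periodic_fn f \<longleftrightarrow> (\<forall>x i. f (x + axis i 1) = f x)"

definition torus_test :: "(real^'d::finite \<Rightarrow> real) \<Rightarrow> bool" where
  "torus_test \<phi> \<longleftrightarrow> smooth_fn \<phi> \<and> periodic_fn \<phi>"

definition H2_torus :: "(real^'d::finite \<Rightarrow> real) \<Rightarrow> bool" where
  "H2_torus f \<longleftrightarrow> L2 (torus_meas TYPE('d)) f \<and>
     (\<forall>is::'d list. length is \<le> 2 \<longrightarrow>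
        (\<exists>g. L2 (torus_meas TYPE('d)) g \<and>
           (\<forall>\<phi>. torus_test \<phi> \<longrightarrow>
              (\<integral>x. f x * pds is \<phi> x \<partial>torus_meas TYPE('d))
              = (-1) ^ length is * (\<integral>x. g x * \<phi> x \<partial>torus_meas TYPE('d)))))"

definition adm_set :: "nat \<Rightarrow> (nat \<Rightarrow> real^'d::finite \<Rightarrow> real) set" where
  "adm_set n = {u. (\<forall>i\<le>n. L2 (torus_meas TYPE('d)) (u i)) \<and>
      (\<forall>i\<le>n. AE x in torus_meas TYPE('d). u i x \<ge> 0) \<and>
      (AE x in torus_meas TYPE('d). (\<Sum>i\<le>n. u i x) = 1)}"

definition smooth_real :: "(real \<Rightarrow> real) \<Rightarrow> bool" where
  "smooth_real f \<longleftrightarrow> (\<forall>k x. ((deriv ^^ k) f) differentiable (at x))"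

text \<open>Integral over the unit sphere S^{d-1} with respect to the surface
  (Hausdorff) measure, via the cone formula
  \<open>\<integral>_S g d\<sigma> = d \<cdot> \<integral>_{B_1} g(x/|x|) dx\<close>.\<close>
definition sphere_integral :: "('d::finite) itself \<Rightarrow> (real^'d \<Rightarrow> real) \<Rightarrow> real" where
  "sphere_integral _ g = real CARD('d) *
      (\<integral>x. indicator (ball 0 1) x * g (x /\<^sub>R norm x) \<partial>(lebesgue :: (real^'d) measure))"

text \<open>A fixed coordinate direction e_1 (any coordinate gives the same value).\<close>
definition e1 :: "real^'d::finite" where
  "e1 = axis (SOME i. True) 1"

definition kernel_ok :: "('d::finite) itself \<Rightarrow> (real \<Rightarrow> real) \<Rightarrow> bool" where
  "kernel_ok T \<rho> \<longleftrightarrow> smooth_real \<rho> \<and>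
     (\<exists>a b. 0 < a \<and> a \<le> b \<and> b < torus_diam T \<and> (\<forall>r. r \<notin> {a..b} \<longrightarrow> \<rho> r = 0)) \<and>
     (\<forall>r. \<rho> r \<ge> 0) \<and>
     set_integrable lborel {0<..} (\<lambda>r. \<rho> r * r powr (real CARD('d) - 3)) \<and>
     (LBINT r:{0<..}. \<rho> r * r ^ (CARD('d) - 1))
        = 2 / sphere_integral T (\<lambda>\<sigma>. \<bar>\<sigma> \<bullet> e1\<bar>)"

definition rho_eps :: "('d::finite) itself \<Rightarrow> (real \<Rightarrow> real) \<Rightarrow> real \<Rightarrow> real \<Rightarrow> real" where
  "rho_eps _ \<rho> \<epsilon> r = \<epsilon> powr (- real CARD('d)) * \<rho> (r / \<epsilon>)"

definition K_eps :: "(real \<Rightarrow> real) \<Rightarrow> real \<Rightarrow> real^'d::finite \<Rightarrow> real^'d \<Rightarrow> real" where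
  "K_eps \<rho> \<epsilon> x y = rho_eps TYPE('d) \<rho> \<epsilon> (tdist x y) / (tdist x y)\<^sup>2"

definition B_eps :: "(real \<Rightarrow> real) \<Rightarrow> real \<Rightarrow> (real^'d::finite \<Rightarrow> real) \<Rightarrow> real^'d \<Rightarrow> real" where
  "B_eps \<rho> \<epsilon> v x =
     (\<integral>y. K_eps \<rho> \<epsilon> x y \<partial>torus_meas TYPE('d)) * v x
     - (\<integral>y. K_eps \<rho> \<epsilon> x y * v y \<partial>torus_meas TYPE('d))"

definition ent :: "real \<Rightarrow> real" where
  "ent t = (if t = 0 then 0 else t * ln t)"

definition F_mu :: "nat \<Rightarrow> (nat \<Rightarrow> nat \<Rightarrow> real) \<Rightarrow> (real \<Rightarrow> real) \<Rightarrow> real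
    \<Rightarrow> (nat \<Rightarrow> real^'d::finite \<Rightarrow> real) \<Rightarrow> (nat \<Rightarrow> real^'d \<Rightarrow> real) \<Rightarrow> real" where
  "F_mu n c \<rho> \<epsilon> \<mu> w = (\<Sum>i\<le>n. \<integral>x. (ent (w i x)
        + (\<Sum>k\<le>n. c i k * B_eps \<rho> \<epsilon> (w k) x * w i x)
        - \<mu> i x * w i x) \<partial>torus_meas TYPE('d))"

definition coeff_ok :: "nat \<Rightarrow> (nat \<Rightarrow> nat \<Rightarrow> real) \<Rightarrow> bool" where
  "coeff_ok n c \<longleftrightarrow> (\<forall>i\<le>n. \<forall>j\<le>n. c i j = c j i) \<and>
     (\<forall>\<xi>::nat \<Rightarrow> real. (\<Sum>i\<le>n. \<Sum>j\<le>n. \<xi> i * c i j * \<xi> j) \<ge> 0) \<and>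
     (\<forall>i\<le>n. c i i > 0)"

definition offdiag_sup :: "nat \<Rightarrow> (nat \<Rightarrow> nat \<Rightarrow> real) \<Rightarrow> real" where
  "offdiag_sup n c = Max ({\<bar>c i j\<bar> | i j. i \<le> n \<and> j \<le> n \<and> i \<noteq> j} \<union> {0})"

definition diag_min :: "nat \<Rightarrow> (nat \<Rightarrow> nat \<Rightarrow> real) \<Rightarrow> real" where
  "diag_min n c = Min {c i i | i. i \<le> n}"

end

theory Submission
  imports Defs "HOL-Real_Asymp.Real_Asymp"
begin

(* Since the profile rho vanishes near 0, the kernel K_eps is bounded, so B_eps is a bounded
   operator on bounded functions and, by the symmetry of the kernel,
     int B(a) b = 1/2 int int K(x,y) (a(x) - a(y)) (b(x) - b(y)) dx dy.
   Positive semidefiniteness of C therefore makes the interaction energy a nonnegative quadratic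
   form, hence convex.  The entropy is uniformly convex on [0,1] (s ln s - s^2/2 is convex),
   so the energy satisfies the midpoint inequality
     2 F((u+v)/2) + |u-v|^2/4 <= F(u) + F(v)   on admissible u, v.  For existence, a minimising sequence with
   F(w_j) < inf F + 4^-j has L^2 increments of order 2^-j, hence summable L^1 increments,
   so it converges almost everywhere; by dominated convergence the limit attains inf F. *)

definition ess_bounded :: "'a measure \<Rightarrow> ('a \<Rightarrow> real) \<Rightarrow> bool" where
  "ess_bounded M f \<longleftrightarrow> f \<in> borel_measurable M \<and> (\<exists>C. AE x in M. \<bar>f x\<bar> \<le> C)"

lemma ess_boundedI: "f \<in> borel_measurable M \<Longrightarrow> (AE x in M. \<bar>f x\<bar> \<le> C) \<Longrightarrow> ess_bounded M f"
  unfolding ess_bounded_def by blast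

lemma ess_bounded_measurable: "ess_bounded M f \<Longrightarrow> f \<in> borel_measurable M"
  by (simp add: ess_bounded_def)

lemma ess_bounded_const [simp]: "ess_bounded M (\<lambda>x. c)"
  by (rule ess_boundedI[where C = "\<bar>c\<bar>"]) auto

lemma ess_bounded_add:
  assumes "ess_bounded M f" "ess_bounded M g"
  shows "ess_bounded M (\<lambda>x. f x + g x)"
proof -
  obtain A B where "AE x in M. \<bar>f x\<bar> \<le> A" "AE x in M. \<bar>g x\<bar> \<le> B"
    using assms unfolding ess_bounded_def by blast
  then have "AE x in M. \<bar>f x + g x\<bar> \<le> A + B"
    by eventually_elim (auto intro: order_trans[OF abs_triangle_ineq] add_mono)
  with borel_measurable_add[OF ess_bounded_measurable ess_bounded_measurable, OF assms] show ?thesis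
    by (rule ess_boundedI)
qed

lemma ess_bounded_diff:
  assumes "ess_bounded M f" "ess_bounded M g"
  shows "ess_bounded M (\<lambda>x. f x - g x)"
proof -
  obtain A B where "AE x in M. \<bar>f x\<bar> \<le> A" "AE x in M. \<bar>g x\<bar> \<le> B"
    using assms unfolding ess_bounded_def by blast
  then have "AE x in M. \<bar>f x - g x\<bar> \<le> A + B"
    by eventually_elim (auto intro: order_trans[OF abs_triangle_ineq4] add_mono)
  with borel_measurable_diff[OF ess_bounded_measurable ess_bounded_measurable, OF assms] show ?thesis
    by (rule ess_boundedI)
qed

lemma ess_bounded_mult:
  assumes "ess_bounded M f" "ess_bounded M g"
  shows "ess_bounded M (\<lambda>x. f x * g x)"
proof -
  obtain A B where "AE x in M. \<bar>f x\<bar> \<le> A" "AE x in M. \<bar>g x\<bar> \<le> B"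
    using assms unfolding ess_bounded_def by blast
  then have "AE x in M. \<bar>f x * g x\<bar> \<le> A * B"
  proof eventually_elim
    case (elim x)
    then have "\<bar>f x\<bar> * \<bar>g x\<bar> \<le> A * B"
      by (intro mult_mono) auto
    then show ?case
      by (simp add: abs_mult)
  qed
  with borel_measurable_times[OF ess_bounded_measurable ess_bounded_measurable, OF assms] show ?thesis
    by (rule ess_boundedI)
qed

lemma AE_convergent_if_summable_integral_diff:
  fixes f :: "nat \<Rightarrow> 'a \<Rightarrow> real"
  assumes int: "\<And>j. integrable M (f j)"
    and summ: "summable (\<lambda>j. \<integral>x. \<bar>f (Suc j) x - f j x\<bar> \<partial>M)"
  shows "AE x in M. convergent (\<lambda>j. f j x)"
proof -
  define g where "g j x = \<bar>f (Suc j) x - f j x\<bar>" for j x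
  have g_int: "integrable M (g j)" for j
    unfolding g_def using int by auto
  then have [measurable]: "g j \<in> borel_measurable M" for j
    by auto
  have "(\<integral>\<^sup>+x. (\<Sum>j. ennreal (g j x)) \<partial>M) = (\<Sum>j. \<integral>\<^sup>+x. ennreal (g j x) \<partial>M)"
    by (rule nn_integral_suminf) measurable
  also have "\<dots> = (\<Sum>j. ennreal (\<integral>x. g j x \<partial>M))"
    by (intro suminf_cong nn_integral_eq_integral g_int) (simp add: g_def)
  also have "\<dots> = ennreal (\<Sum>j. \<integral>x. g j x \<partial>M)"
    using summ by (intro suminf_ennreal2) (simp_all add: g_def)
  finally have "(\<integral>\<^sup>+x. (\<Sum>j. ennreal (g j x)) \<partial>M) \<noteq> \<infinity>"
    by simp
  then have "AE x in M. (\<Sum>j. ennreal (g j x)) \<noteq> \<infinity>"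
    by (intro nn_integral_noteq_infinite) measurable
  then show ?thesis
  proof eventually_elim
    case (elim x)
    then have "summable (\<lambda>j. g j x)"
      by (intro summable_suminf_not_top) (simp_all add: g_def flip: infinity_ennreal_def)
    then have "summable (\<lambda>j. f (Suc j) x - f j x)"
      unfolding g_def by (rule summable_rabs_cancel)
    then have "convergent (\<lambda>J. f J x - f 0 x)"
      by (simp add: summable_iff_convergent sum_lessThan_telescope[where f = "\<lambda>j. f j x"])
    then show ?case
      by (simp add: convergent_diff_const_right_iff)
  qed
qed

context finite_measure
begin

lemma ess_bounded_integrable:
  assumes "ess_bounded M f"
  shows "integrable M f"
proof -
  obtain C where "AE x in M. norm (f x) \<le> C"
    using assms unfolding ess_bounded_def by auto
  then show ?thesis
    by (rule integrable_const_bound) (rule ess_bounded_measurable[OF assms])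
qed

lemma integrable_mult_ess_bounded:
  assumes g: "integrable M g" and f: "ess_bounded M f"
  shows "integrable M (\<lambda>x. g x * f x)"
proof -
  obtain C where C: "AE x in M. \<bar>f x\<bar> \<le> C"
    using f unfolding ess_bounded_def by blast
  show ?thesis
  proof (rule Bochner_Integration.integrable_bound[where f = "\<lambda>x. C * g x"])
    show "integrable M (\<lambda>x. C * g x)"
      using g by simp
    show "(\<lambda>x. g x * f x) \<in> borel_measurable M"
      using g f by (auto intro: borel_measurable_times ess_bounded_measurable)
    show "AE x in M. norm (g x * f x) \<le> norm (C * g x)"
      using C
    proof eventually_elim
      case (elim x)
      then have "\<bar>g x\<bar> * \<bar>f x\<bar> \<le> \<bar>g x\<bar> * \<bar>C\<bar>"
        by (intro mult_left_mono) auto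
      then show ?case
        by (simp add: abs_mult mult.commute)
    qed
  qed
qed

lemma abs_integral_le_measure_space:
  assumes "integrable M f" "AE x in M. \<bar>f x\<bar> \<le> B"
  shows "\<bar>\<integral>x. f x \<partial>M\<bar> \<le> B * measure M (space M)"
proof -
  have "\<bar>\<integral>x. f x \<partial>M\<bar> \<le> (\<integral>x. \<bar>f x\<bar> \<partial>M)"
    by (rule integral_abs_bound)
  also have "\<dots> \<le> (\<integral>x. B \<partial>M)"
    using assms by (intro integral_mono_AE) auto
  finally show ?thesis
    by (simp add: mult.commute)
qed

lemma integral_abs_le_weighted_square:
  assumes g: "ess_bounded M g" and a: "0 < a"
  shows "(\<integral>x. \<bar>g x\<bar> \<partial>M) \<le> (a * (\<integral>x. (g x)\<^sup>2 \<partial>M) + measure M (space M) / a) / 2"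
proof -
  have sq_int: "integrable M (\<lambda>x. (g x)\<^sup>2)"
    using ess_bounded_integrable[OF ess_bounded_mult[OF g g]] by (simp add: power2_eq_square)
  have "\<bar>t\<bar> \<le> (a * t\<^sup>2 + 1 / a) / 2" for t :: real
  proof -
    have "0 \<le> (a * \<bar>t\<bar> - 1)\<^sup>2"
      by simp
    then have "2 * a * \<bar>t\<bar> \<le> a\<^sup>2 * t\<^sup>2 + 1"
      by (simp add: power2_eq_square algebra_simps)
    then show ?thesis
      using a by (simp add: field_simps power2_eq_square)
  qed
  then have "(\<integral>x. \<bar>g x\<bar> \<partial>M) \<le> (\<integral>x. (a * (g x)\<^sup>2 + 1 / a) / 2 \<partial>M)"
    using sq_int ess_bounded_integrable[OF g]
    by (intro integral_mono integrable_abs integrable_divide_zero integrable_add integrable_mult_right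
        integrable_const) simp_all
  also have "\<dots> = (a * (\<integral>x. (g x)\<^sup>2 \<partial>M) + measure M (space M) / a) / 2"
    using sq_int by simp
  finally show ?thesis .
qed

lemma AE_convergent_if_geometric_square_increments:
  assumes f: "\<And>j. ess_bounded M (f j)"
    and incr: "\<And>j. (\<integral>x. (f (Suc j) x - f j x)\<^sup>2 \<partial>M) \<le> D * (1/4)^j"
  shows "AE x in M. convergent (\<lambda>j. f j x)"
proof (rule AE_convergent_if_summable_integral_diff)
  show "integrable M (f j)" for j
    by (rule ess_bounded_integrable[OF f])
  have L1: "(\<integral>x. \<bar>f (Suc j) x - f j x\<bar> \<partial>M) \<le> (D + measure M (space M)) / 2 * (1/2)^j" for j
  proof -
    have "(\<integral>x. \<bar>f (Suc j) x - f j x\<bar> \<partial>M)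
        \<le> (2^j * (\<integral>x. (f (Suc j) x - f j x)\<^sup>2 \<partial>M) + measure M (space M) / 2^j) / 2"
      by (intro integral_abs_le_weighted_square ess_bounded_diff f) simp
    also have "\<dots> \<le> (2^j * (D * (1/4)^j) + measure M (space M) / 2^j) / 2"
      by (intro divide_right_mono add_right_mono mult_left_mono incr) auto
    also have "\<dots> = (D + measure M (space M)) / 2 * (1/2)^j"
    proof -
      have "(2::real)^j * (1/4)^j = (1/2)^j"
        by (simp add: power_mult_distrib[symmetric])
      then show ?thesis
        by (simp add: field_simps power_one_over)
    qed
    finally show ?thesis .
  qed
  show "summable (\<lambda>j. \<integral>x. \<bar>f (Suc j) x - f j x\<bar> \<partial>M)"
  proof (rule summable_comparison_test)
    show "\<exists>N. \<forall>j\<ge>N. norm (\<integral>x. \<bar>f (Suc j) x - f j x\<bar> \<partial>M)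
        \<le> (D + measure M (space M)) / 2 * (1/2)^j"
      using L1 by (intro exI[of _ 0] allI impI) simp
    show "summable (\<lambda>j. (D + measure M (space M)) / 2 * (1/2::real)^j)"
      by (intro summable_mult summable_geometric) simp
  qed
qed

end

section \<open>Bounded symmetric kernels and the nonlocal Laplacian\<close>

definition nonlocal_laplacian ::
    "'a measure \<Rightarrow> ('a \<Rightarrow> 'a \<Rightarrow> real) \<Rightarrow> ('a \<Rightarrow> real) \<Rightarrow> 'a \<Rightarrow> real" where
  "nonlocal_laplacian M K v x = (\<integral>y. K x y \<partial>M) * v x - (\<integral>y. K x y * v y \<partial>M)"

locale bounded_kernel = finite_measure M for M :: "'a measure" +
  fixes K :: "'a \<Rightarrow> 'a \<Rightarrow> real" and C :: real
  assumes kernel_measurable: "(\<lambda>p. K (fst p) (snd p)) \<in> borel_measurable (M \<Otimes>\<^sub>M M)"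
    and kernel_section_measurable: "\<And>x. K x \<in> borel_measurable M"
    and kernel_nonneg: "\<And>x y. 0 \<le> K x y"
    and kernel_le: "\<And>x y. K x y \<le> C"
    and kernel_sym: "\<And>x y. K x y = K y x"

sublocale bounded_kernel \<subseteq> MxM: pair_sigma_finite M M
  by (simp add: pair_sigma_finite_def sigma_finite_measure_axioms)

sublocale bounded_kernel \<subseteq> MxM_fin: finite_measure "M \<Otimes>\<^sub>M M"
  by (intro finite_measure_pair_measure finite_measure_axioms)

context bounded_kernel
begin

lemma ess_bounded_kernel_section: "ess_bounded M (K x)"
  by (rule ess_boundedI[where C = C])
     (simp_all add: kernel_section_measurable kernel_nonneg kernel_le)

lemma integrable_kernel_mult: "ess_bounded M v \<Longrightarrow> integrable M (\<lambda>y. K x y * v y)"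
  by (intro ess_bounded_integrable ess_bounded_mult ess_bounded_kernel_section)

lemma nonlocal_laplacian_eq_integral:
  assumes "ess_bounded M v"
  shows "nonlocal_laplacian M K v x = (\<integral>y. K x y * (v x - v y) \<partial>M)"
proof -
  have "(\<integral>y. K x y * (v x - v y) \<partial>M) = (\<integral>y. K x y * v x - K x y * v y \<partial>M)"
    by (simp add: right_diff_distrib)
  also have "\<dots> = (\<integral>y. K x y \<partial>M) * v x - (\<integral>y. K x y * v y \<partial>M)"
    using integrable_kernel_mult[OF assms] ess_bounded_integrable[OF ess_bounded_kernel_section]
    by (subst Bochner_Integration.integral_diff) auto
  finally show ?thesis
    unfolding nonlocal_laplacian_def ..
qed

lemma nonlocal_laplacian_measurable:
  assumes v: "v \<in> borel_measurable M"
  shows "nonlocal_laplacian M K v \<in> borel_measurable M"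
proof -
  have "(\<lambda>(x, y). K x y) \<in> borel_measurable (M \<Otimes>\<^sub>M M)"
    using kernel_measurable by (simp add: case_prod_beta')
  moreover have "(\<lambda>(x, y). K x y * v y) \<in> borel_measurable (M \<Otimes>\<^sub>M M)"
    unfolding case_prod_beta'
    by (intro borel_measurable_times kernel_measurable measurable_compose[OF measurable_snd v])
  ultimately show ?thesis
    unfolding nonlocal_laplacian_def[abs_def]
    by (intro borel_measurable_diff borel_measurable_times v borel_measurable_lebesgue_integral)
qed

lemma AE_abs_nonlocal_laplacian_le:
  assumes v: "v \<in> borel_measurable M" and bound: "AE y in M. \<bar>v y\<bar> \<le> D"
  shows "AE x in M. \<bar>nonlocal_laplacian M K v x\<bar> \<le> 2 * C * D * measure M (space M)"
  using bound
proof eventually_elim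
  case (elim x)
  have v_bdd: "ess_bounded M v"
    using v bound by (rule ess_boundedI)
  have "AE y in M. \<bar>K x y * (v x - v y)\<bar> \<le> 2 * C * D"
    using bound
  proof eventually_elim
    case (elim y)
    have "\<bar>v x - v y\<bar> \<le> 2 * D"
      using abs_triangle_ineq4[of "v x" "v y"] elim \<open>\<bar>v x\<bar> \<le> D\<close> by linarith
    then have "\<bar>K x y\<bar> * \<bar>v x - v y\<bar> \<le> C * (2 * D)"
      using kernel_nonneg[of x y] kernel_le[of x y] by (intro mult_mono) auto
    then show ?case
      by (simp add: abs_mult)
  qed
  then show ?case
    using integrable_kernel_mult[OF ess_bounded_diff[OF ess_bounded_const v_bdd]]
    by (simp add: nonlocal_laplacian_eq_integral[OF v_bdd] abs_integral_le_measure_space)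
qed

lemma ess_bounded_nonlocal_laplacian:
  assumes "ess_bounded M v"
  shows "ess_bounded M (nonlocal_laplacian M K v)"
proof -
  obtain D where D: "AE y in M. \<bar>v y\<bar> \<le> D"
    using assms unfolding ess_bounded_def by blast
  have v: "v \<in> borel_measurable M"
    using assms by (rule ess_bounded_measurable)
  show ?thesis
    by (rule ess_boundedI[OF nonlocal_laplacian_measurable[OF v] AE_abs_nonlocal_laplacian_le[OF v D]])
qed

lemma nonlocal_laplacian_lincomb:
  assumes a: "ess_bounded M a" and b: "ess_bounded M b"
  shows "nonlocal_laplacian M K (\<lambda>x. p * a x + q * b x) x
      = p * nonlocal_laplacian M K a x + q * nonlocal_laplacian M K b x"
proof -
  have "(\<integral>y. K x y * (p * a y + q * b y) \<partial>M)
      = (\<integral>y. p * (K x y * a y) + q * (K x y * b y) \<partial>M)"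
    by (simp add: algebra_simps)
  also have "\<dots> = p * (\<integral>y. K x y * a y \<partial>M) + q * (\<integral>y. K x y * b y \<partial>M)"
    using integrable_kernel_mult[OF a] integrable_kernel_mult[OF b] by simp
  finally show ?thesis
    unfolding nonlocal_laplacian_def by (simp add: algebra_simps)
qed

lemma nonlocal_laplacian_tendsto:
  assumes w: "\<And>j. w j \<in> borel_measurable M" and v: "v \<in> borel_measurable M"
    and bound: "AE y in M. \<forall>j. \<bar>w j y\<bar> \<le> D"
    and lim: "AE y in M. (\<lambda>j. w j y) \<longlonglongrightarrow> v y"
    and lim_x: "(\<lambda>j. w j x) \<longlonglongrightarrow> v x"
  shows "(\<lambda>j. nonlocal_laplacian M K (w j) x) \<longlonglongrightarrow> nonlocal_laplacian M K v x"
proof -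
  have "(\<lambda>j. \<integral>y. K x y * w j y \<partial>M) \<longlonglongrightarrow> (\<integral>y. K x y * v y \<partial>M)"
  proof (rule integral_dominated_convergence[where w = "\<lambda>y. C * D"])
    show "(\<lambda>y. K x y * v y) \<in> borel_measurable M"
      using kernel_section_measurable v by (rule borel_measurable_times)
    show "(\<lambda>y. K x y * w j y) \<in> borel_measurable M" for j
      using kernel_section_measurable w by (rule borel_measurable_times)
    show "AE y in M. (\<lambda>j. K x y * w j y) \<longlonglongrightarrow> K x y * v y"
      using lim by eventually_elim (rule tendsto_mult_left)
    show "AE y in M. norm (K x y * w j y) \<le> C * D" for j
      using bound
    proof eventually_elim
      case (elim y)
      then have "\<bar>K x y\<bar> * \<bar>w j y\<bar> \<le> C * D"
        using kernel_nonneg[of x y] kernel_le[of x y] by (intro mult_mono) auto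
      then show ?case
        by (simp add: abs_mult)
    qed
  qed simp
  then show ?thesis
    unfolding nonlocal_laplacian_def by (intro tendsto_diff tendsto_mult_left lim_x)
qed

lemma integral_nonlocal_laplacian_mult_tendsto:
  assumes a: "\<And>j. a j \<in> borel_measurable M" "a' \<in> borel_measurable M"
    and b: "\<And>j. b j \<in> borel_measurable M" "b' \<in> borel_measurable M"
    and bound: "AE x in M. \<forall>j. \<bar>a j x\<bar> \<le> D \<and> \<bar>b j x\<bar> \<le> D"
    and lim: "AE x in M. (\<lambda>j. a j x) \<longlonglongrightarrow> a' x \<and> (\<lambda>j. b j x) \<longlonglongrightarrow> b' x"
  shows "(\<lambda>j. \<integral>x. nonlocal_laplacian M K (a j) x * b j x \<partial>M)
    \<longlonglongrightarrow> (\<integral>x. nonlocal_laplacian M K a' x * b' x \<partial>M)"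
proof (rule integral_dominated_convergence[where w = "\<lambda>x. 2 * C * D * measure M (space M) * D"])
  show "(\<lambda>x. nonlocal_laplacian M K a' x * b' x) \<in> borel_measurable M"
    by (intro borel_measurable_times nonlocal_laplacian_measurable a b)
  show "(\<lambda>x. nonlocal_laplacian M K (a j) x * b j x) \<in> borel_measurable M" for j
    by (intro borel_measurable_times nonlocal_laplacian_measurable a b)
  have a_bound: "AE y in M. \<forall>j. \<bar>a j y\<bar> \<le> D"
    using bound by eventually_elim simp
  show "AE x in M. (\<lambda>j. nonlocal_laplacian M K (a j) x * b j x) \<longlonglongrightarrow> nonlocal_laplacian M K a' x * b' x"
    using lim
  proof eventually_elim
    case (elim x)
    have "(\<lambda>j. nonlocal_laplacian M K (a j) x) \<longlonglongrightarrow> nonlocal_laplacian M K a' x"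
    proof (rule nonlocal_laplacian_tendsto[OF a a_bound])
      show "AE y in M. (\<lambda>j. a j y) \<longlonglongrightarrow> a' y"
        using lim by eventually_elim simp
      show "(\<lambda>j. a j x) \<longlonglongrightarrow> a' x"
        using elim by simp
    qed
    then show ?case
      using elim by (intro tendsto_mult) auto
  qed
  show "AE x in M. norm (nonlocal_laplacian M K (a j) x * b j x) \<le> 2 * C * D * measure M (space M) * D"
    for j
  proof -
    have "AE y in M. \<bar>a j y\<bar> \<le> D"
      using bound by eventually_elim simp
    from AE_abs_nonlocal_laplacian_le[OF a(1) this] bound
    show ?thesis
    proof eventually_elim
      case (elim x)
      then have "\<bar>nonlocal_laplacian M K (a j) x\<bar> * \<bar>b j x\<bar> \<le> 2 * C * D * measure M (space M) * D"
        by (intro mult_mono) auto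
      then show ?case
        by (simp add: abs_mult)
    qed
  qed
qed simp

lemma integral_nonlocal_laplacian_parallelogram:
  assumes p: "ess_bounded M p" and q: "ess_bounded M q" and r: "ess_bounded M r" and s: "ess_bounded M s"
  shows "(\<integral>x. nonlocal_laplacian M K p x * r x \<partial>M) + (\<integral>x. nonlocal_laplacian M K q x * s x \<partial>M)
      - 2 * (\<integral>x. nonlocal_laplacian M K (\<lambda>x. (p x + q x) / 2) x * ((r x + s x) / 2) \<partial>M)
    = (\<integral>x. nonlocal_laplacian M K (\<lambda>x. p x - q x) x * (r x - s x) \<partial>M) / 2"
proof -
  let ?L = "nonlocal_laplacian M K"
  have L_mid: "?L (\<lambda>x. (p x + q x) / 2) x = (?L p x + ?L q x) / 2" for x
  proof -
    have "(\<lambda>x. (p x + q x) / 2) = (\<lambda>x. 1/2 * p x + 1/2 * q x)"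
      by (simp add: fun_eq_iff field_simps)
    then show ?thesis
      using nonlocal_laplacian_lincomb[OF p q, of "1/2" "1/2" x] by simp
  qed
  have L_diff: "?L (\<lambda>x. p x - q x) x = ?L p x - ?L q x" for x
    using nonlocal_laplacian_lincomb[OF p q, of 1 "-1" x] by simp
  have mid_bdd: "ess_bounded M (\<lambda>x. (p x + q x) / 2)" "ess_bounded M (\<lambda>x. (r x + s x) / 2)"
    using ess_bounded_mult[OF ess_bounded_add[OF p q] ess_bounded_const[of _ "1/2"]]
      ess_bounded_mult[OF ess_bounded_add[OF r s] ess_bounded_const[of _ "1/2"]]
    by simp_all
  define f1 where "f1 x = ?L p x * r x" for x
  define f2 where "f2 x = ?L q x * s x" for x
  define f3 where "f3 x = ?L (\<lambda>x. (p x + q x) / 2) x * ((r x + s x) / 2)" for x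
  have int: "integrable M f1" "integrable M f2" "integrable M f3"
    unfolding f1_def f2_def f3_def
    by (intro ess_bounded_integrable ess_bounded_mult ess_bounded_nonlocal_laplacian p q r s mid_bdd)+
  have "(\<integral>x. f1 x \<partial>M) + (\<integral>x. f2 x \<partial>M) - 2 * (\<integral>x. f3 x \<partial>M) = (\<integral>x. f1 x + f2 x - 2 * f3 x \<partial>M)"
    using int by simp
  also have "\<dots> = (\<integral>x. ?L (\<lambda>x. p x - q x) x * (r x - s x) / 2 \<partial>M)"
    by (rule Bochner_Integration.integral_cong) (simp_all add: f1_def f2_def f3_def L_mid L_diff field_simps)
  finally show ?thesis
    by (simp add: f1_def f2_def f3_def)
qed

lemma ess_bounded_pair_fst:
  assumes "ess_bounded M f"
  shows "ess_bounded (M \<Otimes>\<^sub>M M) (\<lambda>p. f (fst p))"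
proof -
  obtain D where f: "f \<in> borel_measurable M" and D: "AE x in M. \<bar>f x\<bar> \<le> D"
    using assms unfolding ess_bounded_def by blast
  have m: "(\<lambda>p. f (fst p)) \<in> borel_measurable (M \<Otimes>\<^sub>M M)"
    by (rule measurable_compose[OF measurable_fst f])
  have "AE x in M. AE y in M. \<bar>f x\<bar> \<le> D"
    using D by eventually_elim simp
  then have "AE p in M \<Otimes>\<^sub>M M. \<bar>f (fst p)\<bar> \<le> D"
    by (intro MxM.AE_pair_measure[where P = "\<lambda>p. \<bar>f (fst p)\<bar> \<le> D"] borel_measurable_le
        borel_measurable_abs m borel_measurable_const) simp_all
  with m show ?thesis
    by (rule ess_boundedI)
qed

lemma ess_bounded_pair_snd:
  assumes "ess_bounded M f"
  shows "ess_bounded (M \<Otimes>\<^sub>M M) (\<lambda>p. f (snd p))"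
proof -
  obtain D where f: "f \<in> borel_measurable M" and D: "AE x in M. \<bar>f x\<bar> \<le> D"
    using assms unfolding ess_bounded_def by blast
  have m: "(\<lambda>p. f (snd p)) \<in> borel_measurable (M \<Otimes>\<^sub>M M)"
    by (rule measurable_compose[OF measurable_snd f])
  have "AE x in M. AE y in M. \<bar>f y\<bar> \<le> D"
    using D by simp
  then have "AE p in M \<Otimes>\<^sub>M M. \<bar>f (snd p)\<bar> \<le> D"
    by (intro MxM.AE_pair_measure[where P = "\<lambda>p. \<bar>f (snd p)\<bar> \<le> D"] borel_measurable_le
        borel_measurable_abs m borel_measurable_const) simp_all
  with m show ?thesis
    by (rule ess_boundedI)
qed

lemma ess_bounded_pair_kernel: "ess_bounded (M \<Otimes>\<^sub>M M) (\<lambda>p. K (fst p) (snd p))"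
  by (rule ess_boundedI[where C = C])
     (simp_all add: kernel_measurable kernel_nonneg kernel_le)

lemma integral_nonlocal_laplacian_mult:
  assumes a: "ess_bounded M a" and b: "ess_bounded M b"
  shows "(\<integral>x. nonlocal_laplacian M K a x * b x \<partial>M) =
    (\<integral>p. K (fst p) (snd p) * (a (fst p) - a (snd p)) * (b (fst p) - b (snd p)) \<partial>(M \<Otimes>\<^sub>M M)) / 2"
proof -
  define g where "g p = K (fst p) (snd p) * (a (fst p) - a (snd p)) * b (fst p)" for p
  define h where "h p = K (fst p) (snd p) * (a (fst p) - a (snd p)) * b (snd p)" for p
  have g_bdd: "ess_bounded (M \<Otimes>\<^sub>M M) g" and h_bdd: "ess_bounded (M \<Otimes>\<^sub>M M) h"
    unfolding g_def h_def
    by (intro ess_bounded_mult ess_bounded_diff ess_bounded_pair_kernel ess_bounded_pair_fst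
        ess_bounded_pair_snd a b)+
  note g_int = MxM_fin.ess_bounded_integrable[OF g_bdd]
  note h_int = MxM_fin.ess_bounded_integrable[OF h_bdd]
  have "(\<integral>x. nonlocal_laplacian M K a x * b x \<partial>M) = (\<integral>x. \<integral>y. g (x, y) \<partial>M \<partial>M)"
    by (simp add: g_def nonlocal_laplacian_eq_integral[OF a])
  also have "\<dots> = integral\<^sup>L (M \<Otimes>\<^sub>M M) g"
    by (rule MxM.integral_fst'[OF g_int])
  finally have lhs: "(\<integral>x. nonlocal_laplacian M K a x * b x \<partial>M) = integral\<^sup>L (M \<Otimes>\<^sub>M M) g" .
  \<comment> \<open>exchanging the variables turns \<open>g\<close> into \<open>-h\<close>, by the symmetry of the kernel\<close>
  have "g (y, x) = - h (x, y)" for x y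
    unfolding g_def h_def using kernel_sym[of y x] by (simp add: algebra_simps)
  then have "(\<lambda>(x, y). g (y, x)) = (\<lambda>p. - h p)"
    by auto
  then have swap: "integral\<^sup>L (M \<Otimes>\<^sub>M M) g = - integral\<^sup>L (M \<Otimes>\<^sub>M M) h"
    using MxM.integral_product_swap[OF ess_bounded_measurable[OF g_bdd]] by simp
  have "(\<integral>p. K (fst p) (snd p) * (a (fst p) - a (snd p)) * (b (fst p) - b (snd p)) \<partial>(M \<Otimes>\<^sub>M M))
      = (\<integral>p. g p - h p \<partial>(M \<Otimes>\<^sub>M M))"
    by (simp add: g_def h_def algebra_simps)
  also have "\<dots> = integral\<^sup>L (M \<Otimes>\<^sub>M M) g - integral\<^sup>L (M \<Otimes>\<^sub>M M) h"
    by (rule Bochner_Integration.integral_diff[OF g_int h_int])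
  finally show ?thesis
    using lhs swap by simp
qed

end

section \<open>The entropy density\<close>

lemma ent_measurable [measurable]: "ent \<in> borel_measurable borel"
  unfolding ent_def[abs_def] by measurable

lemma abs_ent_le_one:
  assumes "0 \<le> t" "t \<le> 1"
  shows "\<bar>ent t\<bar> \<le> 1"
proof (cases "t = 0")
  case False
  then have t: "0 < t"
    using assms by simp
  have "t * ln t \<le> 0"
    using assms t by (simp add: mult_nonneg_nonpos)
  moreover have "t * (1 - 1 / t) \<le> t * ln t"
    using ln_le_minus_one[of "1 / t"] t by (intro mult_left_mono) (simp_all add: ln_div)
  ultimately show ?thesis
    using t False by (simp add: ent_def abs_le_iff algebra_simps)
qed (simp add: ent_def)

lemma continuous_on_ent: "continuous_on {0..} ent"
proof -
  have "continuous (at t within {0..}) ent" if t: "0 \<le> t" for t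
  proof (cases "t = 0")
    case True
    have "((\<lambda>x::real. x * ln x) \<longlongrightarrow> 0) (at_right 0)"
      by real_asymp
    then have "(ent \<longlongrightarrow> 0) (at_right 0)"
      by (rule Lim_transform_eventually) (auto simp: ent_def eventually_at_right_less)
    then show ?thesis
      using True by (simp add: continuous_within at_within_Ici_at_right ent_def)
  next
    case False
    then have "0 < t"
      using t by simp
    have "isCont (\<lambda>x. x * ln x) t"
      using \<open>0 < t\<close> by (intro continuous_intros) auto
    moreover have "\<forall>\<^sub>F x in nhds t. x * ln x = ent x"
      using eventually_nhds_in_open[of "{0<..}" t] \<open>0 < t\<close>
      by (auto simp: ent_def elim!: eventually_mono)
    ultimately have "isCont ent t"
      using isCont_cong[of "\<lambda>x. x * ln x" ent t] by blast
    then show ?thesis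
      by (rule continuous_at_imp_continuous_within)
  qed
  then show ?thesis
    by (simp add: continuous_on_eq_continuous_within)
qed

lemma convex_on_xlnx_minus_half_square: "convex_on {0<..1} (\<lambda>t::real. t * ln t - t\<^sup>2 / 2)"
proof (rule convex_on_realI[where f' = "\<lambda>t. ln t + 1 - t"])
  show "connected {0<..(1::real)}"
    by simp
  fix x :: real
  assume "x \<in> {0<..1}"
  then show "((\<lambda>t::real. t * ln t - t\<^sup>2 / 2) has_real_derivative ln x + 1 - x) (at x)"
    by (auto intro!: derivative_eq_intros)
next
  fix x y :: real
  assume xy: "x \<in> {0<..1}" "y \<in> {0<..1}" "x \<le> y"
  have "1 - x / y \<le> ln (y / x)"
    using ln_le_minus_one[of "x / y"] xy by (simp add: ln_div)
  moreover have "y - x \<le> 1 - x / y"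
  proof -
    have "(y - x) * y \<le> y - x"
      using xy by (simp add: mult_left_le)
    then show ?thesis
      using xy by (simp add: field_simps)
  qed
  ultimately show "ln x + 1 - x \<le> ln y + 1 - y"
    using xy by (simp add: ln_div)
qed

lemma ent_midpoint_gap_zero:
  assumes "0 \<le> t" "t \<le> 1"
  shows "t\<^sup>2 / 4 \<le> ent t - 2 * ent (t / 2)"
proof (cases "t = 0")
  case False
  then have t: "0 < t"
    using assms by simp
  have "1 / 2 \<le> ln (2::real)"
    using ln_le_minus_one[of "1 / 2"] by (simp add: ln_div)
  have "t\<^sup>2 / 4 \<le> t * (1 / 2)"
    using assms t by (simp add: power2_eq_square field_simps mult_left_le)
  also have "\<dots> \<le> t * ln 2"
    using \<open>1 / 2 \<le> ln 2\<close> t by (intro mult_left_mono) auto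
  also have "\<dots> = ent t - 2 * ent (t / 2)"
    using t by (simp add: ent_def ln_div algebra_simps)
  finally show ?thesis .
qed (simp add: ent_def)

lemma ent_midpoint_gap:
  assumes "0 \<le> s" "s \<le> 1" "0 \<le> t" "t \<le> 1"
  shows "(s - t)\<^sup>2 / 4 \<le> ent s + ent t - 2 * ent ((s + t) / 2)"
proof -
  have ent_zero: "ent 0 = 0"
    by (simp add: ent_def)
  consider "s = 0" | "t = 0" | "0 < s" "0 < t"
    using assms by linarith
  then show ?thesis
  proof cases
    case 1
    then show ?thesis
      using ent_midpoint_gap_zero[OF assms(3,4)] by (simp add: ent_zero)
  next
    case 2
    then show ?thesis
      using ent_midpoint_gap_zero[OF assms(1,2)] by (simp add: ent_zero)
  next
    case 3
    let ?g = "\<lambda>t::real. t * ln t - t\<^sup>2 / 2"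
    have "?g ((1 - 1/2) *\<^sub>R s + (1/2) *\<^sub>R t) \<le> (1 - 1/2) * ?g s + (1/2) * ?g t"
      by (rule convex_onD[OF convex_on_xlnx_minus_half_square]) (use assms 3 in auto)
    then have "?g ((s + t) / 2) \<le> (?g s + ?g t) / 2"
      by (simp add: field_simps)
    moreover have "ent s = s * ln s" "ent t = t * ln t" "ent ((s + t) / 2) = (s + t) / 2 * ln ((s + t) / 2)"
      using 3 by (auto simp: ent_def)
    ultimately show ?thesis
      by (simp add: power2_eq_square field_simps)
  qed
qed

lemma ess_bounded_ent:
  assumes h: "h \<in> borel_measurable M" and unit: "AE x in M. 0 \<le> h x \<and> h x \<le> 1"
  shows "ess_bounded M (\<lambda>x. ent (h x))"
proof (rule ess_boundedI[OF measurable_compose[OF h ent_measurable]])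
  show "AE x in M. \<bar>ent (h x)\<bar> \<le> 1"
    using unit by eventually_elim (auto intro: abs_ent_le_one)
qed

lemma (in finite_measure) integral_ent_midpoint_gap:
  assumes f: "f \<in> borel_measurable M" and g: "g \<in> borel_measurable M"
    and unit: "AE x in M. 0 \<le> f x \<and> f x \<le> 1 \<and> 0 \<le> g x \<and> g x \<le> 1"
  shows "(\<integral>x. (f x - g x)\<^sup>2 \<partial>M) / 4
    \<le> (\<integral>x. ent (f x) \<partial>M) + (\<integral>x. ent (g x) \<partial>M) - 2 * (\<integral>x. ent ((f x + g x) / 2) \<partial>M)"
proof -
  have mid: "(\<lambda>x. (f x + g x) / 2) \<in> borel_measurable M"
    using f g by (intro borel_measurable_divide borel_measurable_add borel_measurable_const)
  have int_f: "integrable M (\<lambda>x. ent (f x))" and int_g: "integrable M (\<lambda>x. ent (g x))"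
    and int_mid: "integrable M (\<lambda>x. ent ((f x + g x) / 2))"
    by (intro ess_bounded_integrable ess_bounded_ent f g mid eventually_mono[OF unit]; simp)+
  have "AE x in M. \<bar>f x - g x\<bar> \<le> 1"
    using unit by eventually_elim auto
  then have "ess_bounded M (\<lambda>x. f x - g x)"
    by (rule ess_boundedI[OF borel_measurable_diff[OF f g]])
  then have int_sq: "integrable M (\<lambda>x. (f x - g x)\<^sup>2 / 4)"
    using ess_bounded_integrable[OF ess_bounded_mult] by (simp add: power2_eq_square)
  have "(\<integral>x. (f x - g x)\<^sup>2 \<partial>M) / 4 = (\<integral>x. (f x - g x)\<^sup>2 / 4 \<partial>M)"
    by simp
  also have "\<dots> \<le> (\<integral>x. ent (f x) + ent (g x) - 2 * ent ((f x + g x) / 2) \<partial>M)"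
  proof (rule integral_mono_AE[OF int_sq])
    show "integrable M (\<lambda>x. ent (f x) + ent (g x) - 2 * ent ((f x + g x) / 2))"
      using int_f int_g int_mid by simp
    show "AE x in M. (f x - g x)\<^sup>2 / 4 \<le> ent (f x) + ent (g x) - 2 * ent ((f x + g x) / 2)"
      using unit
    proof eventually_elim
      case (elim x)
      then show ?case
        by (intro ent_midpoint_gap) auto
    qed
  qed
  also have "\<dots> = (\<integral>x. ent (f x) \<partial>M) + (\<integral>x. ent (g x) \<partial>M) - 2 * (\<integral>x. ent ((f x + g x) / 2) \<partial>M)"
    using int_f int_g int_mid by simp
  finally show ?thesis .
qed

section \<open>Volume fractions and the free energy\<close>

definition volume_fractions :: "'a measure \<Rightarrow> nat \<Rightarrow> (nat \<Rightarrow> 'a \<Rightarrow> real) set" where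
  "volume_fractions M n = {u. (\<forall>i\<le>n. u i \<in> borel_measurable M \<and> (AE x in M. 0 \<le> u i x)) \<and>
     (AE x in M. (\<Sum>i\<le>n. u i x) = 1)}"

definition free_energy :: "'a measure \<Rightarrow> nat \<Rightarrow> (nat \<Rightarrow> nat \<Rightarrow> real) \<Rightarrow> ('a \<Rightarrow> 'a \<Rightarrow> real)
    \<Rightarrow> (nat \<Rightarrow> 'a \<Rightarrow> real) \<Rightarrow> (nat \<Rightarrow> 'a \<Rightarrow> real) \<Rightarrow> real" where
  "free_energy M n c K \<mu> w = (\<Sum>i\<le>n. \<integral>x. ent (w i x)
     + (\<Sum>k\<le>n. c i k * nonlocal_laplacian M K (w k) x * w i x) - \<mu> i x * w i x \<partial>M)"

definition entropy_energy :: "'a measure \<Rightarrow> nat \<Rightarrow> (nat \<Rightarrow> 'a \<Rightarrow> real) \<Rightarrow> real" where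
  "entropy_energy M n w = (\<Sum>i\<le>n. \<integral>x. ent (w i x) \<partial>M)"

definition interaction_energy :: "'a measure \<Rightarrow> nat \<Rightarrow> (nat \<Rightarrow> nat \<Rightarrow> real)
    \<Rightarrow> ('a \<Rightarrow> 'a \<Rightarrow> real) \<Rightarrow> (nat \<Rightarrow> 'a \<Rightarrow> real) \<Rightarrow> real" where
  "interaction_energy M n c K w =
     (\<Sum>i\<le>n. \<Sum>k\<le>n. c i k * (\<integral>x. nonlocal_laplacian M K (w k) x * w i x \<partial>M))"

definition potential_energy :: "'a measure \<Rightarrow> nat \<Rightarrow> (nat \<Rightarrow> 'a \<Rightarrow> real) \<Rightarrow> (nat \<Rightarrow> 'a \<Rightarrow> real) \<Rightarrow> real" where
  "potential_energy M n \<mu> w = (\<Sum>i\<le>n. \<integral>x. \<mu> i x * w i x \<partial>M)"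

definition sq_L2_dist :: "'a measure \<Rightarrow> nat \<Rightarrow> (nat \<Rightarrow> 'a \<Rightarrow> real) \<Rightarrow> (nat \<Rightarrow> 'a \<Rightarrow> real) \<Rightarrow> real" where
  "sq_L2_dist M n u v = (\<Sum>i\<le>n. \<integral>x. (u i x - v i x)\<^sup>2 \<partial>M)"

lemma volume_fractionsD:
  assumes "w \<in> volume_fractions M n" "i \<le> n"
  shows "w i \<in> borel_measurable M" "AE x in M. 0 \<le> w i x"
  using assms by (auto simp: volume_fractions_def)

lemma AE_volume_fractions_unit:
  assumes w: "w \<in> volume_fractions M n"
  shows "AE x in M. \<forall>i\<le>n. 0 \<le> w i x \<and> w i x \<le> 1"
proof -
  have "AE x in M. \<forall>i\<in>{..n}. 0 \<le> w i x"
    using w by (intro AE_finite_allI) (auto simp: volume_fractions_def)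
  moreover have "AE x in M. (\<Sum>i\<le>n. w i x) = 1"
    using w by (simp add: volume_fractions_def)
  ultimately show ?thesis
  proof eventually_elim
    case (elim x)
    have "w i x \<le> (\<Sum>j\<le>n. w j x)" if "i \<le> n" for i
      using elim that by (intro member_le_sum) auto
    then show ?case
      using elim by auto
  qed
qed

lemma volume_fractions_ess_bounded:
  assumes w: "w \<in> volume_fractions M n" and i: "i \<le> n"
  shows "ess_bounded M (w i)"
proof (rule ess_boundedI)
  show "w i \<in> borel_measurable M"
    using volume_fractionsD[OF w i] by simp
  show "AE x in M. \<bar>w i x\<bar> \<le> 1"
    using AE_volume_fractions_unit[OF w] by eventually_elim (use i in auto)
qed

lemma AE_volume_fractions_abs_ent_le_one:
  assumes w: "w \<in> volume_fractions M n" and i: "i \<le> n"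
  shows "AE x in M. \<bar>ent (w i x)\<bar> \<le> 1"
  using AE_volume_fractions_unit[OF w] by eventually_elim (use i in \<open>auto intro: abs_ent_le_one\<close>)

lemma volume_fractions_ent_ess_bounded:
  assumes w: "w \<in> volume_fractions M n" and i: "i \<le> n"
  shows "ess_bounded M (\<lambda>x. ent (w i x))"
  using AE_volume_fractions_unit[OF w] i
  by (intro ess_bounded_ent volume_fractionsD(1)[OF w i]) (auto elim: eventually_mono)

lemma volume_fractions_nonempty: "(\<lambda>i x. if i = 0 then 1 else 0) \<in> volume_fractions M n"
  by (simp add: volume_fractions_def sum.delta)

lemma volume_fractions_midpoint:
  assumes u: "u \<in> volume_fractions M n" and v: "v \<in> volume_fractions M n"
  shows "(\<lambda>i x. (u i x + v i x) / 2) \<in> volume_fractions M n"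
proof -
  have "(\<lambda>x. (u i x + v i x) / 2) \<in> borel_measurable M" if "i \<le> n" for i
    using volume_fractionsD(1)[OF u that] volume_fractionsD(1)[OF v that]
    by (intro borel_measurable_divide borel_measurable_add borel_measurable_const)
  moreover have "AE x in M. 0 \<le> (u i x + v i x) / 2" if "i \<le> n" for i
    using volume_fractionsD(2)[OF u that] volume_fractionsD(2)[OF v that] by eventually_elim simp
  moreover have "AE x in M. (\<Sum>i\<le>n. u i x) = 1" "AE x in M. (\<Sum>i\<le>n. v i x) = 1"
    using u v by (simp_all add: volume_fractions_def)
  then have "AE x in M. (\<Sum>i\<le>n. (u i x + v i x) / 2) = 1"
    by eventually_elim (simp add: sum_divide_distrib[symmetric] sum.distrib)
  ultimately show ?thesis
    unfolding volume_fractions_def by auto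
qed

lemma volume_fractions_limit:
  assumes W: "\<And>j. W j \<in> volume_fractions M n"
    and u: "\<And>i. i \<le> n \<Longrightarrow> u i \<in> borel_measurable M"
    and lim: "AE x in M. \<forall>i\<le>n. (\<lambda>j. W j i x) \<longlonglongrightarrow> u i x"
  shows "u \<in> volume_fractions M n"
proof -
  have nonneg: "AE x in M. \<forall>j. \<forall>i\<le>n. 0 \<le> W j i x"
    using AE_volume_fractions_unit[OF W] by (simp add: AE_all_countable)
  have sum: "AE x in M. \<forall>j. (\<Sum>i\<le>n. W j i x) = 1"
    using W by (simp add: AE_all_countable volume_fractions_def)
  have "AE x in M. 0 \<le> u i x" if i: "i \<le> n" for i
    using lim nonneg
  proof eventually_elim
    case (elim x)
    show ?case
      using i elim by (intro LIMSEQ_le_const[of "\<lambda>j. W j i x"]) auto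
  qed
  moreover have "AE x in M. (\<Sum>i\<le>n. u i x) = 1"
    using lim sum
  proof eventually_elim
    case (elim x)
    then have "(\<lambda>j. \<Sum>i\<le>n. W j i x) \<longlonglongrightarrow> (\<Sum>i\<le>n. u i x)"
      by (intro tendsto_sum) auto
    then show ?case
      using elim by (simp add: LIMSEQ_const_iff)
  qed
  ultimately show ?thesis
    using u unfolding volume_fractions_def by auto
qed

locale nonlocal_energy = bounded_kernel M K C for M :: "'a measure" and K C +
  fixes n :: nat and c :: "nat \<Rightarrow> nat \<Rightarrow> real" and \<mu> :: "nat \<Rightarrow> 'a \<Rightarrow> real"
  assumes coeff_psd: "\<And>\<xi>. 0 \<le> (\<Sum>i\<le>n. \<Sum>j\<le>n. \<xi> i * c i j * \<xi> j)"
    and integrable_potential: "\<And>i. i \<le> n \<Longrightarrow> integrable M (\<mu> i)"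
begin

abbreviation Adm :: "(nat \<Rightarrow> 'a \<Rightarrow> real) set" where
  "Adm \<equiv> volume_fractions M n"

abbreviation energy :: "(nat \<Rightarrow> 'a \<Rightarrow> real) \<Rightarrow> real" where
  "energy \<equiv> free_energy M n c K \<mu>"

lemma interaction_energy_nonneg:
  assumes d: "\<And>i. i \<le> n \<Longrightarrow> ess_bounded M (d i)"
  shows "0 \<le> interaction_energy M n c K d"
proof -
  define G where "G i k p = K (fst p) (snd p) * (d k (fst p) - d k (snd p)) * (d i (fst p) - d i (snd p))"
    for i k p
  have G_int: "integrable (M \<Otimes>\<^sub>M M) (G i k)" if "i \<le> n" "k \<le> n" for i k
    unfolding G_def using that
    by (intro MxM_fin.ess_bounded_integrable ess_bounded_mult ess_bounded_diff ess_bounded_pair_kernel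
        ess_bounded_pair_fst ess_bounded_pair_snd d)
  have "(\<Sum>i\<le>n. \<Sum>k\<le>n. c i k * integral\<^sup>L (M \<Otimes>\<^sub>M M) (G i k))
      = (\<Sum>i\<le>n. \<integral>p. (\<Sum>k\<le>n. c i k * G i k p) \<partial>(M \<Otimes>\<^sub>M M))"
    by (intro sum.cong refl, subst Bochner_Integration.integral_sum) (use G_int in auto)
  also have "\<dots> = (\<integral>p. (\<Sum>i\<le>n. \<Sum>k\<le>n. c i k * G i k p) \<partial>(M \<Otimes>\<^sub>M M))"
    by (rule Bochner_Integration.integral_sum[symmetric]) (use G_int in auto)
  also have "\<dots> \<ge> 0"
  proof (rule Bochner_Integration.integral_nonneg)
    fix p :: "'a \<times> 'a"
    have "(\<Sum>i\<le>n. \<Sum>k\<le>n. c i k * G i k p) = K (fst p) (snd p) *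
        (\<Sum>i\<le>n. \<Sum>k\<le>n. (d i (fst p) - d i (snd p)) * c i k * (d k (fst p) - d k (snd p)))"
      unfolding G_def by (simp add: sum_distrib_left mult_ac)
    then show "0 \<le> (\<Sum>i\<le>n. \<Sum>k\<le>n. c i k * G i k p)"
      using coeff_psd kernel_nonneg by simp
  qed
  finally have "0 \<le> (\<Sum>i\<le>n. \<Sum>k\<le>n. c i k * integral\<^sup>L (M \<Otimes>\<^sub>M M) (G i k))" .
  moreover have "interaction_energy M n c K d = (\<Sum>i\<le>n. \<Sum>k\<le>n. c i k * integral\<^sup>L (M \<Otimes>\<^sub>M M) (G i k)) / 2"
    unfolding interaction_energy_def G_def sum_divide_distrib
    by (intro sum.cong refl) (simp add: integral_nonlocal_laplacian_mult d)
  ultimately show ?thesis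
    by simp
qed

lemma energy_split:
  assumes w: "w \<in> Adm"
  shows "energy w = entropy_energy M n w + interaction_energy M n c K w - potential_energy M n \<mu> w"
proof -
  let ?L = "nonlocal_laplacian M K"
  have "(\<integral>x. ent (w i x) + (\<Sum>k\<le>n. c i k * ?L (w k) x * w i x) - \<mu> i x * w i x \<partial>M)
      = (\<integral>x. ent (w i x) \<partial>M) + (\<Sum>k\<le>n. c i k * (\<integral>x. ?L (w k) x * w i x \<partial>M))
        - (\<integral>x. \<mu> i x * w i x \<partial>M)" if i: "i \<le> n" for i
  proof -
    have int_k: "integrable M (\<lambda>x. ?L (w k) x * w i x)" if "k \<le> n" for k
      by (intro ess_bounded_integrable ess_bounded_mult ess_bounded_nonlocal_laplacian
          volume_fractions_ess_bounded[OF w] i that)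
    have int_sum: "integrable M (\<lambda>x. \<Sum>k\<le>n. c i k * (?L (w k) x * w i x))"
      using int_k by auto
    have int_ent: "integrable M (\<lambda>x. ent (w i x))"
      by (rule ess_bounded_integrable[OF volume_fractions_ent_ess_bounded[OF w i]])
    have int_pot: "integrable M (\<lambda>x. \<mu> i x * w i x)"
      by (rule integrable_mult_ess_bounded[OF integrable_potential[OF i]
            volume_fractions_ess_bounded[OF w i]])
    have "(\<integral>x. ent (w i x) + (\<Sum>k\<le>n. c i k * ?L (w k) x * w i x) - \<mu> i x * w i x \<partial>M)
        = (\<integral>x. ent (w i x) + (\<Sum>k\<le>n. c i k * (?L (w k) x * w i x)) - \<mu> i x * w i x \<partial>M)"
      by (simp add: mult.assoc)
    also have "\<dots> = (\<integral>x. ent (w i x) \<partial>M) + (\<integral>x. (\<Sum>k\<le>n. c i k * (?L (w k) x * w i x)) \<partial>M)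
        - (\<integral>x. \<mu> i x * w i x \<partial>M)"
      using int_ent int_sum int_pot by simp
    also have "(\<integral>x. (\<Sum>k\<le>n. c i k * (?L (w k) x * w i x)) \<partial>M)
        = (\<Sum>k\<le>n. c i k * (\<integral>x. ?L (w k) x * w i x \<partial>M))"
      by (subst Bochner_Integration.integral_sum) (use int_k in auto)
    finally show ?thesis .
  qed
  then show ?thesis
    unfolding free_energy_def entropy_energy_def interaction_energy_def potential_energy_def
    by (simp add: sum.distrib sum_subtractf)
qed

lemma entropy_energy_midpoint:
  assumes u: "u \<in> Adm" and v: "v \<in> Adm"
  shows "sq_L2_dist M n u v / 4
    \<le> entropy_energy M n u + entropy_energy M n v - 2 * entropy_energy M n (\<lambda>i x. (u i x + v i x) / 2)"
proof -
  have "(\<integral>x. (u i x - v i x)\<^sup>2 \<partial>M) / 4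
      \<le> (\<integral>x. ent (u i x) \<partial>M) + (\<integral>x. ent (v i x) \<partial>M) - 2 * (\<integral>x. ent ((u i x + v i x) / 2) \<partial>M)"
    if i: "i \<le> n" for i
  proof (rule integral_ent_midpoint_gap[OF volume_fractionsD(1)[OF u i] volume_fractionsD(1)[OF v i]])
    show "AE x in M. 0 \<le> u i x \<and> u i x \<le> 1 \<and> 0 \<le> v i x \<and> v i x \<le> 1"
      using AE_volume_fractions_unit[OF u] AE_volume_fractions_unit[OF v]
      by eventually_elim (use i in auto)
  qed
  then have "(\<Sum>i\<le>n. (\<integral>x. (u i x - v i x)\<^sup>2 \<partial>M) / 4)
      \<le> (\<Sum>i\<le>n. (\<integral>x. ent (u i x) \<partial>M) + (\<integral>x. ent (v i x) \<partial>M)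
        - 2 * (\<integral>x. ent ((u i x + v i x) / 2) \<partial>M))"
    by (intro sum_mono) simp
  then show ?thesis
    unfolding sq_L2_dist_def entropy_energy_def
    by (simp add: sum_divide_distrib sum.distrib sum_subtractf sum_distrib_left)
qed

lemma interaction_energy_midpoint:
  assumes u: "u \<in> Adm" and v: "v \<in> Adm"
  shows "2 * interaction_energy M n c K (\<lambda>i x. (u i x + v i x) / 2)
    \<le> interaction_energy M n c K u + interaction_energy M n c K v"
proof -
  let ?L = "nonlocal_laplacian M K" and ?Q = "interaction_energy M n c K"
  have u_bdd: "ess_bounded M (u i)" and v_bdd: "ess_bounded M (v i)" if "i \<le> n" for i
    using volume_fractions_ess_bounded[OF u that] volume_fractions_ess_bounded[OF v that] by auto
  have summand: "c i k * (\<integral>x. ?L (u k) x * u i x \<partial>M) + c i k * (\<integral>x. ?L (v k) x * v i x \<partial>M)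
      - 2 * (c i k * (\<integral>x. ?L (\<lambda>x. (u k x + v k x) / 2) x * ((u i x + v i x) / 2) \<partial>M))
    = c i k * (\<integral>x. ?L (\<lambda>x. u k x - v k x) x * (u i x - v i x) \<partial>M) / 2" if "i \<le> n" "k \<le> n" for i k
    using arg_cong[OF integral_nonlocal_laplacian_parallelogram[OF u_bdd[OF that(2)] v_bdd[OF that(2)]
          u_bdd[OF that(1)] v_bdd[OF that(1)]], where f = "\<lambda>t. c i k * t"]
    by (simp add: algebra_simps)
  have "?Q u + ?Q v - 2 * ?Q (\<lambda>i x. (u i x + v i x) / 2)
      = (\<Sum>i\<le>n. \<Sum>k\<le>n. c i k * (\<integral>x. ?L (u k) x * u i x \<partial>M) + c i k * (\<integral>x. ?L (v k) x * v i x \<partial>M)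
          - 2 * (c i k * (\<integral>x. ?L (\<lambda>x. (u k x + v k x) / 2) x * ((u i x + v i x) / 2) \<partial>M)))"
    unfolding interaction_energy_def by (simp add: sum.distrib sum_subtractf sum_distrib_left)
  also have "\<dots> = (\<Sum>i\<le>n. \<Sum>k\<le>n. c i k * (\<integral>x. ?L (\<lambda>x. u k x - v k x) x * (u i x - v i x) \<partial>M) / 2)"
    by (intro sum.cong refl summand) auto
  also have "\<dots> = ?Q (\<lambda>i x. u i x - v i x) / 2"
    unfolding interaction_energy_def by (simp add: sum_divide_distrib)
  finally show ?thesis
    using interaction_energy_nonneg[of "\<lambda>i x. u i x - v i x"] u_bdd v_bdd
    by (simp add: ess_bounded_diff)
qed

lemma potential_energy_midpoint:
  assumes u: "u \<in> Adm" and v: "v \<in> Adm"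
  shows "potential_energy M n \<mu> u + potential_energy M n \<mu> v
    = 2 * potential_energy M n \<mu> (\<lambda>i x. (u i x + v i x) / 2)"
proof -
  have "(\<integral>x. \<mu> i x * u i x \<partial>M) + (\<integral>x. \<mu> i x * v i x \<partial>M)
      = 2 * (\<integral>x. \<mu> i x * ((u i x + v i x) / 2) \<partial>M)" if i: "i \<le> n" for i
  proof -
    have "integrable M (\<lambda>x. \<mu> i x * u i x)" "integrable M (\<lambda>x. \<mu> i x * v i x)"
      using integrable_potential[OF i] volume_fractions_ess_bounded[OF u i] volume_fractions_ess_bounded[OF v i]
      by (auto intro: integrable_mult_ess_bounded)
    moreover have "(\<lambda>x. \<mu> i x * ((u i x + v i x) / 2)) = (\<lambda>x. (\<mu> i x * u i x + \<mu> i x * v i x) / 2)"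
      by (simp add: fun_eq_iff algebra_simps)
    ultimately show ?thesis
      by simp
  qed
  then show ?thesis
    unfolding potential_energy_def by (simp add: sum.distrib[symmetric] sum_distrib_left)
qed

lemma energy_midpoint:
  assumes u: "u \<in> Adm" and v: "v \<in> Adm"
  shows "2 * energy (\<lambda>i x. (u i x + v i x) / 2) + sq_L2_dist M n u v / 4 \<le> energy u + energy v"
proof -
  define h where "h = (\<lambda>i x. (u i x + v i x) / 2)"
  have "h \<in> Adm"
    unfolding h_def by (rule volume_fractions_midpoint[OF u v])
  then show ?thesis
    using entropy_energy_midpoint[OF u v] interaction_energy_midpoint[OF u v]
      potential_energy_midpoint[OF u v] energy_split[OF u] energy_split[OF v] energy_split[OF \<open>h \<in> Adm\<close>]
    unfolding h_def[symmetric] by linarith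
qed

lemma sq_L2_dist_le_if_near_inf:
  assumes lower: "\<And>w. w \<in> Adm \<Longrightarrow> m \<le> energy w" and u: "u \<in> Adm" and v: "v \<in> Adm"
    and "energy u \<le> m + e" "energy v \<le> m + e"
  shows "sq_L2_dist M n u v \<le> 8 * e"
proof -
  define h where "h = (\<lambda>i x. (u i x + v i x) / 2)"
  have "h \<in> Adm"
    unfolding h_def by (rule volume_fractions_midpoint[OF u v])
  then show ?thesis
    using lower[OF \<open>h \<in> Adm\<close>] energy_midpoint[OF u v] assms(4,5) unfolding h_def[symmetric]
    by linarith
qed

lemma energy_lower_bound:
  assumes w: "w \<in> Adm"
  shows "- (real (Suc n) * measure M (space M)) - (\<Sum>i\<le>n. \<integral>x. \<bar>\<mu> i x\<bar> \<partial>M) \<le> energy w"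
proof -
  have "- measure M (space M) \<le> (\<integral>x. ent (w i x) \<partial>M)" if i: "i \<le> n" for i
    using abs_integral_le_measure_space[OF ess_bounded_integrable[OF
          volume_fractions_ent_ess_bounded[OF w i]] AE_volume_fractions_abs_ent_le_one[OF w i]]
    by simp
  then have "(\<Sum>i\<le>n. - measure M (space M)) \<le> entropy_energy M n w"
    unfolding entropy_energy_def by (intro sum_mono) auto
  then have entropy: "- (real (Suc n) * measure M (space M)) \<le> entropy_energy M n w"
    by simp
  have "(\<integral>x. \<mu> i x * w i x \<partial>M) \<le> (\<integral>x. \<bar>\<mu> i x\<bar> \<partial>M)" if i: "i \<le> n" for i
  proof (rule integral_mono_AE)
    show "integrable M (\<lambda>x. \<mu> i x * w i x)"
      by (rule integrable_mult_ess_bounded[OF integrable_potential[OF i]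
            volume_fractions_ess_bounded[OF w i]])
    show "integrable M (\<lambda>x. \<bar>\<mu> i x\<bar>)"
      using integrable_potential[OF i] by simp
    show "AE x in M. \<mu> i x * w i x \<le> \<bar>\<mu> i x\<bar>"
      using AE_volume_fractions_unit[OF w]
    proof eventually_elim
      case (elim x)
      then have "\<bar>\<mu> i x\<bar> * \<bar>w i x\<bar> \<le> \<bar>\<mu> i x\<bar> * 1"
        using i by (intro mult_left_mono) auto
      then show ?case
        using abs_ge_self[of "\<mu> i x * w i x"] unfolding abs_mult by linarith
    qed
  qed
  then have "potential_energy M n \<mu> w \<le> (\<Sum>i\<le>n. \<integral>x. \<bar>\<mu> i x\<bar> \<partial>M)"
    unfolding potential_energy_def by (intro sum_mono) auto
  moreover have "0 \<le> interaction_energy M n c K w"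
    by (intro interaction_energy_nonneg volume_fractions_ess_bounded[OF w])
  ultimately show ?thesis
    using entropy energy_split[OF w] by linarith
qed

lemma entropy_energy_tendsto:
  assumes W: "\<And>j. W j \<in> Adm" and u: "u \<in> Adm"
    and lim: "AE x in M. \<forall>i\<le>n. (\<lambda>j. W j i x) \<longlonglongrightarrow> u i x"
  shows "(\<lambda>j. entropy_energy M n (W j)) \<longlonglongrightarrow> entropy_energy M n u"
  unfolding entropy_energy_def
proof (intro tendsto_sum)
  fix i
  assume "i \<in> {..n}"
  then have i: "i \<le> n"
    by simp
  show "(\<lambda>j. \<integral>x. ent (W j i x) \<partial>M) \<longlonglongrightarrow> (\<integral>x. ent (u i x) \<partial>M)"
  proof (rule integral_dominated_convergence[where w = "\<lambda>x. 1"])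
    show "(\<lambda>x. ent (u i x)) \<in> borel_measurable M"
      by (rule ess_bounded_measurable[OF volume_fractions_ent_ess_bounded[OF u i]])
    show "(\<lambda>x. ent (W j i x)) \<in> borel_measurable M" for j
      by (rule ess_bounded_measurable[OF volume_fractions_ent_ess_bounded[OF W i]])
    have W_unit: "AE x in M. \<forall>j. \<forall>i\<le>n. 0 \<le> W j i x \<and> W j i x \<le> 1"
      using AE_volume_fractions_unit[OF W] by (simp add: AE_all_countable)
    show "AE x in M. (\<lambda>j. ent (W j i x)) \<longlonglongrightarrow> ent (u i x)"
      using lim AE_volume_fractions_unit[OF u] W_unit
    proof eventually_elim
      case (elim x)
      then show ?case
        using i by (intro continuous_on_tendsto_compose[OF continuous_on_ent]) auto
    qed
    show "AE x in M. norm (ent (W j i x)) \<le> 1" for j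
      using AE_volume_fractions_abs_ent_le_one[OF W i] by simp
  qed simp
qed

lemma potential_energy_tendsto:
  assumes W: "\<And>j. W j \<in> Adm" and u: "u \<in> Adm"
    and lim: "AE x in M. \<forall>i\<le>n. (\<lambda>j. W j i x) \<longlonglongrightarrow> u i x"
  shows "(\<lambda>j. potential_energy M n \<mu> (W j)) \<longlonglongrightarrow> potential_energy M n \<mu> u"
  unfolding potential_energy_def
proof (intro tendsto_sum)
  fix i
  assume "i \<in> {..n}"
  then have i: "i \<le> n"
    by simp
  show "(\<lambda>j. \<integral>x. \<mu> i x * W j i x \<partial>M) \<longlonglongrightarrow> (\<integral>x. \<mu> i x * u i x \<partial>M)"
  proof (rule integral_dominated_convergence[where w = "\<lambda>x. \<bar>\<mu> i x\<bar>"])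
    show "(\<lambda>x. \<mu> i x * u i x) \<in> borel_measurable M"
      using integrable_mult_ess_bounded[OF integrable_potential[OF i]
          volume_fractions_ess_bounded[OF u i]] by simp
    show "(\<lambda>x. \<mu> i x * W j i x) \<in> borel_measurable M" for j
      using integrable_mult_ess_bounded[OF integrable_potential[OF i]
          volume_fractions_ess_bounded[OF W i]] by simp
    show "integrable M (\<lambda>x. \<bar>\<mu> i x\<bar>)"
      using integrable_potential[OF i] by simp
    show "AE x in M. (\<lambda>j. \<mu> i x * W j i x) \<longlonglongrightarrow> \<mu> i x * u i x"
      using lim by eventually_elim (use i in \<open>auto intro: tendsto_mult_left\<close>)
    show "AE x in M. norm (\<mu> i x * W j i x) \<le> \<bar>\<mu> i x\<bar>" for j
      using AE_volume_fractions_unit[OF W[of j]]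
    proof eventually_elim
      case (elim x)
      then have "\<bar>\<mu> i x\<bar> * \<bar>W j i x\<bar> \<le> \<bar>\<mu> i x\<bar> * 1"
        using i by (intro mult_left_mono) auto
      then show ?case
        by (simp add: abs_mult)
    qed
  qed
qed

lemma interaction_energy_tendsto:
  assumes W: "\<And>j. W j \<in> Adm" and u: "u \<in> Adm"
    and lim: "AE x in M. \<forall>i\<le>n. (\<lambda>j. W j i x) \<longlonglongrightarrow> u i x"
  shows "(\<lambda>j. interaction_energy M n c K (W j)) \<longlonglongrightarrow> interaction_energy M n c K u"
  unfolding interaction_energy_def
proof (intro tendsto_sum tendsto_mult_left)
  fix i k
  assume "i \<in> {..n}" "k \<in> {..n}"
  then have i: "i \<le> n" and k: "k \<le> n"
    by auto
  have "AE x in M. \<forall>j. \<forall>i\<le>n. 0 \<le> W j i x \<and> W j i x \<le> 1"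
    using AE_volume_fractions_unit[OF W] by (simp add: AE_all_countable)
  then have bound: "AE x in M. \<forall>j. \<bar>W j k x\<bar> \<le> 1 \<and> \<bar>W j i x\<bar> \<le> 1"
    by eventually_elim (use i k in auto)
  have lim_ik: "AE x in M. (\<lambda>j. W j k x) \<longlonglongrightarrow> u k x \<and> (\<lambda>j. W j i x) \<longlonglongrightarrow> u i x"
    using lim by eventually_elim (use i k in auto)
  show "(\<lambda>j. \<integral>x. nonlocal_laplacian M K (W j k) x * W j i x \<partial>M)
      \<longlonglongrightarrow> (\<integral>x. nonlocal_laplacian M K (u k) x * u i x \<partial>M)"
    using volume_fractionsD(1)[OF W k] volume_fractionsD(1)[OF u k]
      volume_fractionsD(1)[OF W i] volume_fractionsD(1)[OF u i]
    by (rule integral_nonlocal_laplacian_mult_tendsto[OF _ _ _ _ bound lim_ik])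
qed

lemma energy_tendsto:
  assumes W: "\<And>j. W j \<in> Adm" and u: "u \<in> Adm"
    and lim: "AE x in M. \<forall>i\<le>n. (\<lambda>j. W j i x) \<longlonglongrightarrow> u i x"
  shows "(\<lambda>j. energy (W j)) \<longlonglongrightarrow> energy u"
  using tendsto_diff[OF tendsto_add[OF entropy_energy_tendsto[OF assms]
        interaction_energy_tendsto[OF assms]] potential_energy_tendsto[OF assms]]
  by (simp add: energy_split W u)

theorem energy_minimizer_unique:
  assumes u: "u \<in> Adm" and v: "v \<in> Adm"
    and u_min: "\<forall>w\<in>Adm. energy u \<le> energy w" and v_min: "\<forall>w\<in>Adm. energy v \<le> energy w"
  shows "\<forall>i\<le>n. AE x in M. v i x = u i x"
proof (intro allI impI)
  fix i
  assume i: "i \<le> n"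
  have sq_int: "integrable M (\<lambda>x. (u i x - v i x)\<^sup>2)" if "i \<le> n" for i
    using ess_bounded_integrable[OF ess_bounded_mult[OF ess_bounded_diff ess_bounded_diff]]
      volume_fractions_ess_bounded[OF u that] volume_fractions_ess_bounded[OF v that]
    by (simp add: power2_eq_square)
  have "sq_L2_dist M n u v \<le> 8 * 0"
    using u_min v_min u by (intro sq_L2_dist_le_if_near_inf[of "energy u"] u v) auto
  then have "(\<Sum>i\<le>n. \<integral>x. (u i x - v i x)\<^sup>2 \<partial>M) = 0"
    unfolding sq_L2_dist_def by (intro antisym sum_nonneg) auto
  then have "(\<integral>x. (u i x - v i x)\<^sup>2 \<partial>M) = 0"
    using i by (subst (asm) sum_nonneg_eq_0_iff) auto
  then have "AE x in M. (u i x - v i x)\<^sup>2 = 0"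
    using sq_int[OF i] by (subst (asm) integral_nonneg_eq_0_iff_AE) auto
  then show "AE x in M. v i x = u i x"
    by eventually_elim simp
qed

lemma AE_convergent_fast_minimizing_sequence:
  assumes lower: "\<And>w. w \<in> Adm \<Longrightarrow> m \<le> energy w" and W: "\<And>j. W j \<in> Adm"
    and W_near: "\<And>j. energy (W j) < m + (1/4)^j"
  shows "AE x in M. \<forall>i\<le>n. convergent (\<lambda>j. W j i x)"
proof -
  have "sq_L2_dist M n (W (Suc j)) (W j) \<le> 8 * (1/4)^j" for j
  proof (rule sq_L2_dist_le_if_near_inf[OF lower W W])
    have "(1/4::real)^Suc j \<le> (1/4)^j"
      by (rule power_decreasing) simp_all
    then show "energy (W (Suc j)) \<le> m + (1/4)^j"
      using W_near[of "Suc j"] by linarith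
  qed (simp_all add: less_imp_le[OF W_near])
  moreover have "(\<integral>x. (W (Suc j) i x - W j i x)\<^sup>2 \<partial>M) \<le> sq_L2_dist M n (W (Suc j)) (W j)"
    if "i \<le> n" for i j
    unfolding sq_L2_dist_def
    by (rule member_le_sum[where f = "\<lambda>i. \<integral>x. (W (Suc j) i x - W j i x)\<^sup>2 \<partial>M"]) (use that in auto)
  ultimately have "(\<integral>x. (W (Suc j) i x - W j i x)\<^sup>2 \<partial>M) \<le> 8 * (1/4)^j" if "i \<le> n" for i j
    using that by (meson order_trans)
  then have "AE x in M. \<forall>i\<in>{..n}. convergent (\<lambda>j. W j i x)"
    by (intro AE_finite_allI AE_convergent_if_geometric_square_increments[where D = 8]
        volume_fractions_ess_bounded[OF W]) auto
  then show ?thesis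
    by eventually_elim auto
qed

theorem energy_has_minimizer: "\<exists>u\<in>Adm. \<forall>w\<in>Adm. energy u \<le> energy w"
proof -
  define m where "m = Inf (energy ` Adm)"
  have lower: "m \<le> energy w" if "w \<in> Adm" for w
    unfolding m_def using that energy_lower_bound
    by (intro cInf_lower bdd_belowI2[where m = "- (real (Suc n) * measure M (space M))
        - (\<Sum>i\<le>n. \<integral>x. \<bar>\<mu> i x\<bar> \<partial>M)"]) auto
  have "\<exists>w\<in>Adm. energy w < m + (1/4)^j" for j :: nat
  proof -
    have "\<exists>y\<in>energy ` Adm. y < m + (1/4)^j"
      using volume_fractions_nonempty unfolding m_def by (intro cInf_lessD) auto
    then show ?thesis
      by blast
  qed
  then obtain W where W: "\<And>j. W j \<in> Adm" and W_near: "\<And>j. energy (W j) < m + (1/4)^j"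
    by metis
  define u where "u i x = lim (\<lambda>j. W j i x)" for i x
  have "AE x in M. \<forall>i\<le>n. convergent (\<lambda>j. W j i x)"
    by (rule AE_convergent_fast_minimizing_sequence[OF _ W W_near]) (rule lower)
  then have lim: "AE x in M. \<forall>i\<le>n. (\<lambda>j. W j i x) \<longlonglongrightarrow> u i x"
    by eventually_elim (auto simp: u_def convergent_LIMSEQ_iff)
  have u: "u \<in> Adm"
    using lim unfolding u_def[abs_def]
    by (intro volume_fractions_limit[OF W] borel_measurable_lim_metric volume_fractionsD(1)[OF W])
  have "(\<lambda>j. energy (W j)) \<longlonglongrightarrow> m"
  proof (rule tendsto_sandwich[of "\<lambda>j. m" _ _ "\<lambda>j. m + (1/4)^j"])
    show "(\<lambda>j. m + (1/4::real)^j) \<longlonglongrightarrow> m"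
      using tendsto_add[OF tendsto_const LIMSEQ_power_zero[of "1/4::real"]] by simp
    show "\<forall>\<^sub>F j in sequentially. m \<le> energy (W j)"
      using lower[OF W] by simp
    show "\<forall>\<^sub>F j in sequentially. energy (W j) \<le> m + (1/4)^j"
      using W_near by (simp add: less_imp_le)
  qed simp
  then have "energy u = m"
    using energy_tendsto[OF W u lim] by (rule LIMSEQ_unique[rotated])
  then show ?thesis
    using u lower by auto
qed

end

section \<open>The flat torus\<close>

abbreviation torus :: "(real^'d::finite) measure" where
  "torus \<equiv> torus_meas TYPE('d)"

lemma torus_cell_lmeasurable: "torus_cell TYPE('d::finite) \<in> lmeasurable"
proof (rule bounded_set_imp_lmeasurable)
  have "torus_cell TYPE('d) \<subseteq> cbox 0 1"
    by (auto simp: torus_cell_def mem_box_cart less_imp_le)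
  then show "bounded (torus_cell TYPE('d))"
    by (meson bounded_cbox bounded_subset)
  have "{x \<in> space borel. \<forall>i. 0 \<le> (x::real^'d) $ i \<and> x $ i < 1} \<in> sets borel"
    by measurable
  then have "torus_cell TYPE('d) \<in> sets borel"
    by (simp add: torus_cell_def)
  then show "torus_cell TYPE('d) \<in> sets lebesgue"
    by (intro sets_completionI_sets) simp
qed

interpretation torus: finite_measure "torus :: (real^'d::finite) measure"
  unfolding torus_meas_def by (rule finite_measure_lebesgue_on[OF torus_cell_lmeasurable])

lemma id_borel_measurable_torus: "(\<lambda>x. x) \<in> measurable (torus :: (real^'d::finite) measure) borel"
  using id_borel_measurable_lebesgue_on unfolding torus_meas_def id_def by blast

lemma borel_measurable_torus:
  "f \<in> borel_measurable borel \<Longrightarrow> f \<in> borel_measurable (torus :: (real^'d::finite) measure)"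
  using measurable_compose[OF id_borel_measurable_torus] by blast

lemma borel_measurable_torus_pair:
  assumes "f \<in> borel_measurable (borel :: ((real^'d::finite) \<times> (real^'d)) measure)"
  shows "f \<in> borel_measurable (torus \<Otimes>\<^sub>M (torus :: (real^'d) measure))"
proof -
  have "(\<lambda>p. p) \<in> measurable (torus \<Otimes>\<^sub>M (torus :: (real^'d) measure)) (borel \<Otimes>\<^sub>M borel)"
    by (intro measurable_pair measurable_compose[OF _ id_borel_measurable_torus]) auto
  then have "(\<lambda>p. p) \<in> measurable (torus \<Otimes>\<^sub>M (torus :: (real^'d) measure)) borel"
    by (simp add: borel_prod)
  from measurable_compose[OF this assms] show ?thesis
    by simp
qed

definition torus_norm :: "real^'d::finite \<Rightarrow> real" where
  "torus_norm z = (INF k\<in>(UNIV :: ('d \<Rightarrow> int) set). norm (z - (\<chi> i. real_of_int (k i))))"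

lemma tdist_eq_torus_norm: "tdist x y = torus_norm (x - y)"
  by (simp add: tdist_def torus_norm_def)

lemma torus_norm_le: "torus_norm z \<le> norm (z - (\<chi> i. real_of_int (k i)))"
  unfolding torus_norm_def by (rule cINF_lower[OF bdd_belowI2[where m = 0]]) simp_all

lemma torus_norm_triangle: "torus_norm (z::real^'d::finite) \<le> torus_norm w + norm (z - w)"
proof -
  have "torus_norm z - norm (z - w) \<le> torus_norm w"
    unfolding torus_norm_def[of w]
  proof (rule cINF_greatest)
    fix k :: "'d \<Rightarrow> int"
    have "torus_norm z \<le> norm (z - (\<chi> i. real_of_int (k i)))"
      by (rule torus_norm_le)
    also have "\<dots> \<le> norm (w - (\<chi> i. real_of_int (k i))) + norm (z - w)"
      by (metis add.commute diff_add_cancel norm_triangle_ineq add_diff_eq)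
    finally show "torus_norm z - norm (z - w) \<le> norm (w - (\<chi> i. real_of_int (k i)))"
      by simp
  qed simp
  then show ?thesis
    by simp
qed

lemma continuous_on_torus_norm: "continuous_on UNIV torus_norm"
proof (rule lipschitz_on_continuous_on[OF lipschitz_onI])
  fix x y :: "real^'d"
  show "dist (torus_norm x) (torus_norm y) \<le> 1 * dist x y"
    using torus_norm_triangle[of x y] torus_norm_triangle[of y x]
    by (simp add: dist_norm norm_minus_commute abs_le_iff)
qed simp

lemma torus_norm_uminus: "torus_norm (- z) = torus_norm z"
proof -
  have le: "torus_norm (- w) \<le> torus_norm w" for w :: "real^'d"
    unfolding torus_norm_def[of w]
  proof (rule cINF_greatest)
    fix k :: "'d \<Rightarrow> int"
    have "- w - (\<chi> i. real_of_int (- k i)) = - (w - (\<chi> i. real_of_int (k i)))"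
      by (simp add: vec_eq_iff)
    then show "torus_norm (- w) \<le> norm (w - (\<chi> i. real_of_int (k i)))"
      using torus_norm_le[of "- w" "\<lambda>i. - k i"] by (simp only: norm_minus_cancel)
  qed simp
  show ?thesis
    using le[of z] le[of "- z"] by simp
qed

lemma smooth_real_continuous:
  assumes "smooth_real f"
  shows "continuous_on UNIV f"
proof -
  have "(deriv ^^ 0) f differentiable (at x)" for x
    using assms unfolding smooth_real_def by blast
  then show ?thesis
    by (simp add: continuous_on_eq_continuous_within differentiable_imp_continuous_within)
qed

lemma K_eps_le:
  fixes x y :: "real^'d::finite"
  assumes nonneg: "\<And>r. 0 \<le> \<rho> r" and supp: "\<And>r. r \<notin> {a..b} \<Longrightarrow> \<rho> r = 0"
    and R: "\<And>r. r \<in> {a..b} \<Longrightarrow> \<rho> r \<le> R" and "0 \<le> R" "0 < a" "0 < \<epsilon>"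
  shows "K_eps \<rho> \<epsilon> x y \<le> \<epsilon> powr (- real CARD('d)) * R / (\<epsilon> * a)\<^sup>2"
proof (cases "\<rho> (tdist x y / \<epsilon>) = 0")
  case True
  then show ?thesis
    using \<open>0 \<le> R\<close> unfolding K_eps_def rho_eps_def by simp
next
  \<comment> \<open>\<open>\<rho>\<close> vanishes on \<open>[0, a)\<close>, so the singularity of \<open>1 / tdist x y\<^sup>2\<close> is never reached\<close>
  case False
  then have in_supp: "tdist x y / \<epsilon> \<in> {a..b}"
    using supp by blast
  then have "\<epsilon> * a \<le> tdist x y"
    using \<open>0 < \<epsilon>\<close> by (simp add: field_simps)
  then have "(\<epsilon> * a)\<^sup>2 \<le> (tdist x y)\<^sup>2"
    using \<open>0 < a\<close> \<open>0 < \<epsilon>\<close> by (intro power_mono) auto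
  moreover have "\<epsilon> powr (- real CARD('d)) * \<rho> (tdist x y / \<epsilon>) \<le> \<epsilon> powr (- real CARD('d)) * R"
    using R[OF in_supp] by (intro mult_left_mono) auto
  ultimately show ?thesis
    unfolding K_eps_def rho_eps_def
    using \<open>0 \<le> R\<close> \<open>0 < a\<close> \<open>0 < \<epsilon>\<close> nonneg by (intro frac_le) auto
qed

lemma K_eps_sym: "K_eps \<rho> \<epsilon> x y = K_eps \<rho> \<epsilon> y x"
  unfolding K_eps_def tdist_eq_torus_norm using torus_norm_uminus[of "x - y"] by simp

lemma K_eps_borel_measurable:
  assumes cont: "continuous_on UNIV \<rho>"
  shows "(\<lambda>p. K_eps \<rho> \<epsilon> (fst p) (snd p)) \<in> borel_measurable (borel :: ((real^'d::finite) \<times> (real^'d)) measure)"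
proof -
  have [measurable]: "\<rho> \<in> borel_measurable borel"
    by (rule borel_measurable_continuous_onI[OF cont])
  have "(\<lambda>p::(real^'d) \<times> (real^'d). torus_norm (fst p - snd p)) \<in> borel_measurable borel"
    by (intro borel_measurable_continuous_onI continuous_on_compose2[OF continuous_on_torus_norm]
        continuous_intros) auto
  moreover have "(\<lambda>r. \<epsilon> powr (- real CARD('d)) * \<rho> (r / \<epsilon>) / r\<^sup>2) \<in> borel_measurable borel"
    by measurable
  ultimately show ?thesis
    unfolding K_eps_def rho_eps_def tdist_eq_torus_norm by (rule measurable_compose)
qed

lemma bounded_kernel_K_eps:
  assumes kernel: "kernel_ok TYPE('d::finite) \<rho>" and eps: "0 < \<epsilon>"
  shows "\<exists>C. bounded_kernel (torus :: (real^'d) measure) (K_eps \<rho> \<epsilon>) C"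
proof -
  have cont: "continuous_on UNIV \<rho>"
    using kernel unfolding kernel_ok_def by (blast intro: smooth_real_continuous)
  obtain a b where ab: "0 < a" "a \<le> b" and supp: "\<And>r. r \<notin> {a..b} \<Longrightarrow> \<rho> r = 0"
    using kernel unfolding kernel_ok_def by blast
  have nonneg: "\<And>r. 0 \<le> \<rho> r"
    using kernel unfolding kernel_ok_def by blast
  have "bounded (\<rho> ` {a..b})"
    by (intro compact_imp_bounded compact_continuous_image continuous_on_subset[OF cont]) auto
  then obtain R where "\<forall>r\<in>\<rho> ` {a..b}. norm r \<le> R"
    unfolding bounded_iff by blast
  then have R: "\<And>r. r \<in> {a..b} \<Longrightarrow> \<rho> r \<le> R"
    by (auto simp: abs_le_iff)
  have "0 \<le> R"
    using R[of a] nonneg[of a] ab by auto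
  note K_borel = K_eps_borel_measurable[OF cont, of \<epsilon>, where 'd = 'd]
  have "bounded_kernel (torus :: (real^'d) measure) (K_eps \<rho> \<epsilon>) (\<epsilon> powr (- real CARD('d)) * R / (\<epsilon> * a)\<^sup>2)"
  proof (intro bounded_kernel.intro bounded_kernel_axioms.intro torus.finite_measure_axioms)
    show "(\<lambda>p. K_eps \<rho> \<epsilon> (fst p) (snd p)) \<in> borel_measurable (torus \<Otimes>\<^sub>M (torus :: (real^'d) measure))"
      by (rule borel_measurable_torus_pair[OF K_borel])
    show "K_eps \<rho> \<epsilon> x \<in> borel_measurable torus" for x :: "real^'d"
    proof -
      have "(\<lambda>y. (x, y)) \<in> measurable borel (borel :: ((real^'d) \<times> (real^'d)) measure)"
        by (simp add: borel_measurable_continuous_onI continuous_intros)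
      from measurable_compose[OF this K_borel] show ?thesis
        by (intro borel_measurable_torus) simp
    qed
    show "0 \<le> K_eps \<rho> \<epsilon> x y" for x y :: "real^'d"
      unfolding K_eps_def rho_eps_def using nonneg by simp
    show "K_eps \<rho> \<epsilon> x y \<le> \<epsilon> powr (- real CARD('d)) * R / (\<epsilon> * a)\<^sup>2" for x y :: "real^'d"
      by (rule K_eps_le[OF nonneg supp R \<open>0 \<le> R\<close> ab(1) eps])
  qed (rule K_eps_sym)
  then show ?thesis ..
qed

lemma adm_set_eq_volume_fractions: "adm_set n = volume_fractions (torus :: (real^'d::finite) measure) n"
proof (intro set_eqI iffI)
  fix w :: "nat \<Rightarrow> real^'d \<Rightarrow> real"
  assume "w \<in> adm_set n"
  then show "w \<in> volume_fractions torus n"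
    unfolding adm_set_def volume_fractions_def L2_def by auto
next
  fix w :: "nat \<Rightarrow> real^'d \<Rightarrow> real"
  assume w: "w \<in> volume_fractions torus n"
  have "L2 torus (w i)" if "i \<le> n" for i
    using torus.ess_bounded_integrable[OF ess_bounded_mult[OF volume_fractions_ess_bounded[OF w that]
          volume_fractions_ess_bounded[OF w that]]] volume_fractionsD(1)[OF w that]
    by (simp add: L2_def power2_eq_square)
  with w show "w \<in> adm_set n"
    unfolding adm_set_def volume_fractions_def by auto
qed

lemma F_mu_eq_free_energy: "F_mu n c \<rho> \<epsilon> \<mu> w = free_energy torus n c (K_eps \<rho> \<epsilon>) \<mu> w"
  by (simp add: F_mu_def free_energy_def B_eps_def nonlocal_laplacian_def)

lemma H2_torus_integrable: "H2_torus f \<Longrightarrow> integrable torus f"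
  unfolding H2_torus_def L2_def by (blast intro: torus.square_integrable_imp_integrable)

theorem lemma3p4:
  fixes n :: nat and \<rho> :: "real \<Rightarrow> real"
  assumes dim: "CARD('d::finite) = 2 \<or> CARD('d) = 3"
    and n: "n \<ge> 1"
    and kernel: "kernel_ok TYPE('d) \<rho>"
  shows "\<exists>\<delta>>0. \<forall>(c :: nat \<Rightarrow> nat \<Rightarrow> real) (\<epsilon>::real) (\<mu> :: nat \<Rightarrow> real^'d \<Rightarrow> real).
           coeff_ok n c \<and> (real n - 1) * offdiag_sup n c < \<delta> * diag_min n c
           \<and> \<epsilon> > 0 \<and> (\<forall>i\<le>n. H2_torus (\<mu> i)) \<longrightarrow>
           (\<exists>u \<in> adm_set n.
              (\<forall>w \<in> adm_set n. F_mu n c \<rho> \<epsilon> \<mu> u \<le> F_mu n c \<rho> \<epsilon> \<mu> w) \<and>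
              (\<forall>v \<in> adm_set n. (\<forall>w \<in> adm_set n. F_mu n c \<rho> \<epsilon> \<mu> v \<le> F_mu n c \<rho> \<epsilon> \<mu> w)
                 \<longrightarrow> (\<forall>i\<le>n. AE x in torus_meas TYPE('d). v i x = u i x)))"
proof (intro exI[of _ 1] conjI allI impI)
  fix c :: "nat \<Rightarrow> nat \<Rightarrow> real" and \<epsilon> :: real and \<mu> :: "nat \<Rightarrow> real^'d \<Rightarrow> real"
  assume "coeff_ok n c \<and> (real n - 1) * offdiag_sup n c < 1 * diag_min n c \<and> \<epsilon> > 0
    \<and> (\<forall>i\<le>n. H2_torus (\<mu> i))"
  then have c: "coeff_ok n c" and eps: "\<epsilon> > 0" and \<mu>: "\<forall>i\<le>n. H2_torus (\<mu> i)"
    by auto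
  obtain C where "bounded_kernel (torus :: (real^'d) measure) (K_eps \<rho> \<epsilon>) C"
    using bounded_kernel_K_eps[OF kernel eps] by blast
  then interpret nonlocal_energy torus "K_eps \<rho> \<epsilon>" C n c \<mu>
    using c \<mu> unfolding coeff_ok_def
    by (intro nonlocal_energy.intro nonlocal_energy_axioms.intro) (auto intro: H2_torus_integrable)
  obtain u where u: "u \<in> Adm" and u_min: "\<forall>w\<in>Adm. energy u \<le> energy w"
    using energy_has_minimizer by blast
  then show "\<exists>u \<in> adm_set n. (\<forall>w \<in> adm_set n. F_mu n c \<rho> \<epsilon> \<mu> u \<le> F_mu n c \<rho> \<epsilon> \<mu> w) \<and>
      (\<forall>v \<in> adm_set n. (\<forall>w \<in> adm_set n. F_mu n c \<rho> \<epsilon> \<mu> v \<le> F_mu n c \<rho> \<epsilon> \<mu> w)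
         \<longrightarrow> (\<forall>i\<le>n. AE x in torus. v i x = u i x))"
    unfolding adm_set_eq_volume_fractions F_mu_eq_free_energy
    using energy_minimizer_unique by blast
qed simp

end
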